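(* Let $(G,M,\Delta)$ be a Garside structure, $(H,N,\delta)$ a parabolic substructure, $T$ the set of $(H,N)$-reduced elements of $G$, and $\mathcal S=\mathrm{Div}(\Delta)\setminus\{1\}$. Let $\alpha\in G$, $\beta\in\pi_H(\alpha)$ and $u\in\mathcal S$. Let $\theta\in T$ with $H\theta=H\alpha$, and assume $\theta\in M$. Then there exists $\beta'\in\pi_H(\alpha u)$ such that $d(\beta,\beta')\le3$.
   Context: Let $G$ be a group and $M$ a submonoid with $M\cap M^{-1}=\{1\}$. Define $\alpha\le_L\beta$ iff $\alpha^{-1}\beta\in M$, and $\alpha\le_R\beta$ iff $\beta\alpha^{-1}\in M$. For $a\in M$ let $\mathrm{Div}_L(a)=\{b\in M: b\le_L a\}$, $\mathrm{Div}_R(a)=\{b\in M: b\le_R a\}$; $a$ is balanced if these coincide, and then $\mathrm{Div}(a)$ denotes this set. $M$ is Noetherian if each $a\in M$ admits an $n$ such that $a$ is not a product of more than $n$ non-trivial factors. A Garside structure $(G,M,\Delta)$: $\Delta\in M$ balanced, $M$ Noetherian, $\mathrm{Div}(\Delta)$ finite and generating $M$ as a monoid and $G$ as a group, $(G,\le_L)$ a lattice with meet $\wedge_L$. A parabolic substructure $(H,N,\delta)$: $\delta\in M$ balanced, $H$ (resp. $N$) the subgroup (resp. submonoid) generated by $\mathrm{Div}(\delta)$, and $\mathrm{Div}(\delta)=\mathrm{Div}(\Delta)\cap N$; it is assumed $H\ne\{1\}$. Put $\omega=\delta^{-1}\Delta$. $a\in M$ is unmovable if $\Delta\not\le_L a$;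 every $\alpha\in G$ has a unique right $\Delta$-form $\alpha=a\Delta^p$ ($a\in M$ unmovable, $p\in\mathbb Z$). $a\in M$ is $N$-reduced if $a\wedge_L\delta=1$. $\alpha$ with right $\Delta$-form $a\Delta^p$ is $(H,N)$-reduced if $a$ is $N$-reduced and either $p=0$, or $p<0$ and $\omega\not\le_L a$. With $\lg$ the word length w.r.t. $\mathcal S$: $d(\alpha,\beta)=\lg(\alpha^{-1}\beta)$, $d(\alpha,H)=\min_{\beta\in H}d(\alpha,\beta)$, $\pi_H(\alpha)=\{\beta\in H:d(\alpha,\beta)=d(\alpha,H)\}$. *)

theory Defs
  imports "HOL-Algebra.Algebra"
begin

definition leL :: "('a,'b) monoid_scheme \<Rightarrow> 'a set \<Rightarrow> 'a \<Rightarrow> 'a \<Rightarrow> bool" where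
  "leL G M x y \<longleftrightarrow> inv\<^bsub>G\<^esub> x \<otimes>\<^bsub>G\<^esub> y \<in> M"

definition leR :: "('a,'b) monoid_scheme \<Rightarrow> 'a set \<Rightarrow> 'a \<Rightarrow> 'a \<Rightarrow> bool" where
  "leR G M x y \<longleftrightarrow> y \<otimes>\<^bsub>G\<^esub> inv\<^bsub>G\<^esub> x \<in> M"

definition DivL :: "('a,'b) monoid_scheme \<Rightarrow> 'a set \<Rightarrow> 'a \<Rightarrow> 'a set" where
  "DivL G M a = {b \<in> M. leL G M b a}"

definition DivR :: "('a,'b) monoid_scheme \<Rightarrow> 'a set \<Rightarrow> 'a \<Rightarrow> 'a set" where
  "DivR G M a = {b \<in> M. leR G M b a}"

definition balanced :: "('a,'b) monoid_scheme \<Rightarrow> 'a set \<Rightarrow> 'a \<Rightarrow> bool" where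
  "balanced G M a \<longleftrightarrow> a \<in> M \<and> DivL G M a = DivR G M a"

text \<open>For balanced a, Div(a) is the common value of DivL and DivR.\<close>
definition Div :: "('a,'b) monoid_scheme \<Rightarrow> 'a set \<Rightarrow> 'a \<Rightarrow> 'a set" where
  "Div G M a = DivL G M a"

definition lprod :: "('a,'b) monoid_scheme \<Rightarrow> 'a list \<Rightarrow> 'a" where
  "lprod G xs = foldr (\<lambda>x y. x \<otimes>\<^bsub>G\<^esub> y) xs \<one>\<^bsub>G\<^esub>"

definition monoid_gen :: "('a,'b) monoid_scheme \<Rightarrow> 'a set \<Rightarrow> 'a set" where
  "monoid_gen G S = {lprod G xs | xs. set xs \<subseteq> S}"

definition noetherian :: "('a,'b) monoid_scheme \<Rightarrow> 'a set \<Rightarrow> bool" where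
  "noetherian G M \<longleftrightarrow> (\<forall>a\<in>M. \<exists>n::nat. \<forall>xs. set xs \<subseteq> M - {\<one>\<^bsub>G\<^esub>} \<and> lprod G xs = a \<longrightarrow> length xs \<le> n)"

definition is_meetL :: "('a,'b) monoid_scheme \<Rightarrow> 'a set \<Rightarrow> 'a \<Rightarrow> 'a \<Rightarrow> 'a \<Rightarrow> bool" where
  "is_meetL G M x y m \<longleftrightarrow> m \<in> carrier G \<and> leL G M m x \<and> leL G M m y \<and>
     (\<forall>c\<in>carrier G. leL G M c x \<and> leL G M c y \<longrightarrow> leL G M c m)"

definition is_joinL :: "('a,'b) monoid_scheme \<Rightarrow> 'a set \<Rightarrow> 'a \<Rightarrow> 'a \<Rightarrow> 'a \<Rightarrow> bool" where
  "is_joinL G M x y j \<longleftrightarrow> j \<in> carrier G \<and> leL G M x j \<and> leL G M y j \<and>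
     (\<forall>c\<in>carrier G. leL G M x c \<and> leL G M y c \<longrightarrow> leL G M j c)"

definition meetL :: "('a,'b) monoid_scheme \<Rightarrow> 'a set \<Rightarrow> 'a \<Rightarrow> 'a \<Rightarrow> 'a" where
  "meetL G M x y = (THE m. is_meetL G M x y m)"

definition garside :: "('a,'b) monoid_scheme \<Rightarrow> 'a set \<Rightarrow> 'a \<Rightarrow> bool" where
  "garside G M \<Delta> \<longleftrightarrow>
     group G \<and> submonoid M G \<and> M \<inter> ((\<lambda>x. inv\<^bsub>G\<^esub> x) ` M) = {\<one>\<^bsub>G\<^esub>} \<and>
     balanced G M \<Delta> \<and> noetherian G M \<and> finite (Div G M \<Delta>) \<and>
     monoid_gen G (Div G M \<Delta>) = M \<and> generate G (Div G M \<Delta>) = carrier G \<and>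
     (\<forall>x\<in>carrier G. \<forall>y\<in>carrier G. (\<exists>m. is_meetL G M x y m) \<and> (\<exists>j. is_joinL G M x y j))"

definition parabolic :: "('a,'b) monoid_scheme \<Rightarrow> 'a set \<Rightarrow> 'a \<Rightarrow> 'a set \<Rightarrow> 'a set \<Rightarrow> 'a \<Rightarrow> bool" where
  "parabolic G M \<Delta> H N \<delta> \<longleftrightarrow>
     balanced G M \<delta> \<and> H = generate G (Div G M \<delta>) \<and> N = monoid_gen G (Div G M \<delta>) \<and>
     Div G M \<delta> = Div G M \<Delta> \<inter> N \<and> H \<noteq> {\<one>\<^bsub>G\<^esub>}"

definition unmovable :: "('a,'b) monoid_scheme \<Rightarrow> 'a set \<Rightarrow> 'a \<Rightarrow> 'a \<Rightarrow> bool" where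
  "unmovable G M \<Delta> a \<longleftrightarrow> a \<in> M \<and> \<not> leL G M \<Delta> a"

definition N_reduced :: "('a,'b) monoid_scheme \<Rightarrow> 'a set \<Rightarrow> 'a \<Rightarrow> 'a \<Rightarrow> bool" where
  "N_reduced G M \<delta> a \<longleftrightarrow> a \<in> M \<and> meetL G M a \<delta> = \<one>\<^bsub>G\<^esub>"

text \<open>(H,N)-reduced: the (unique) right Delta-form a Delta^p of alpha satisfies the conditions.\<close>
definition HN_reduced :: "('a,'b) monoid_scheme \<Rightarrow> 'a set \<Rightarrow> 'a \<Rightarrow> 'a \<Rightarrow> 'a \<Rightarrow> bool" where
  "HN_reduced G M \<Delta> \<delta> \<alpha> \<longleftrightarrow>
     (\<exists>a (p::int). unmovable G M \<Delta> a \<and> \<alpha> = a \<otimes>\<^bsub>G\<^esub> (\<Delta> [^]\<^bsub>G\<^esub> p) \<and>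
        N_reduced G M \<delta> a \<and>
        (p = 0 \<or> (p < 0 \<and> \<not> leL G M (inv\<^bsub>G\<^esub> \<delta> \<otimes>\<^bsub>G\<^esub> \<Delta>) a)))"

definition HN_reduced_set :: "('a,'b) monoid_scheme \<Rightarrow> 'a set \<Rightarrow> 'a \<Rightarrow> 'a \<Rightarrow> 'a set" where
  "HN_reduced_set G M \<Delta> \<delta> = {\<alpha> \<in> carrier G. HN_reduced G M \<Delta> \<delta> \<alpha>}"

definition wlen :: "('a,'b) monoid_scheme \<Rightarrow> 'a set \<Rightarrow> 'a \<Rightarrow> nat" where
  "wlen G S x = (LEAST n. \<exists>xs. length xs = n \<and> set xs \<subseteq> S \<union> (\<lambda>x. inv\<^bsub>G\<^esub> x) ` S \<and> lprod G xs = x)"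

definition gdist :: "('a,'b) monoid_scheme \<Rightarrow> 'a set \<Rightarrow> 'a \<Rightarrow> 'a \<Rightarrow> nat" where
  "gdist G S x y = wlen G S (inv\<^bsub>G\<^esub> x \<otimes>\<^bsub>G\<^esub> y)"

definition setdist :: "('a,'b) monoid_scheme \<Rightarrow> 'a set \<Rightarrow> 'a \<Rightarrow> 'a set \<Rightarrow> nat" where
  "setdist G S x H = (LEAST n. \<exists>y\<in>H. gdist G S x y = n)"

definition proj :: "('a,'b) monoid_scheme \<Rightarrow> 'a set \<Rightarrow> 'a set \<Rightarrow> 'a \<Rightarrow> 'a set" where
  "proj G S H x = {y \<in> H. gdist G S x y = setdist G S x H}"

end

theory Submission
  imports Defs
begin

text \<open>
  Write \<open>\<alpha> = h \<theta>\<close> with \<open>h \<in> H\<close>; left translation by \<open>h\<close> is an isometry preserving \<open>H\<close>, so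
  we may assume \<open>\<alpha> = \<theta>\<close>, which is \<open>N\<close>-reduced. Word length is read off the prefix order:
  \<open>|z| = min {P + Q. \<Delta>\<^bsup>-Q\<^esup> \<preceq> z \<preceq> \<Delta>\<^bsup>P\<^esup>}\<close>. Every element of \<open>H\<close> is a fraction
  \<open>a\<^bsup>-1\<^esup> b\<close> with \<open>a, b \<in> N\<close> and \<open>a\<close> left coprime to \<open>b \<theta>\<close>; this forces \<open>d(\<theta>, H) = sup \<theta>\<close>, and
  every nearest point is \<open>\<gamma> = b\<^bsup>-1\<^esup>\<close> with \<open>b \<in> N\<close> and \<open>b \<theta> \<preceq> \<Delta>\<^bsup>sup \<theta>\<^esup>\<close>.
  Splitting off \<open>n = \<theta> u \<curlywedge> \<delta>\<close> gives \<open>\<theta> u = n \<theta>'\<close> with \<open>\<theta>'\<close> again \<open>N\<close>-reduced, so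
  \<open>d(\<theta> u, H) = sup \<theta>'\<close>. A nearest point to \<open>\<theta> u\<close> is \<open>n J\<close>, where \<open>J\<close> is the join of \<open>(b n)\<^bsup>-1\<^esup>\<close>
  and \<open>\<theta>' \<Delta>\<^bsup>-sup \<theta>'\<^esup>\<close>; then \<open>\<gamma>\<^bsup>-1\<^esup> n J = b n J\<close> lies between \<open>1\<close> and \<open>\<Delta>\<^bsup>2\<^esup>\<close>, so its length
  is at most 2.
\<close>

context monoid
begin

lemma lprod_Nil [simp]: "lprod G [] = \<one>"
  by (simp add: lprod_def)

lemma lprod_Cons [simp]: "lprod G (x # xs) = x \<otimes> lprod G xs"
  by (simp add: lprod_def)

lemma lprod_closed [intro, simp]: "set xs \<subseteq> carrier G \<Longrightarrow> lprod G xs \<in> carrier G"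
  by (induct xs) auto

lemma lprod_append:
  "set xs \<subseteq> carrier G \<Longrightarrow> set ys \<subseteq> carrier G \<Longrightarrow> lprod G (xs @ ys) = lprod G xs \<otimes> lprod G ys"
  by (induct xs) (simp_all add: m_assoc)

lemma lprod_filter_one:
  "set xs \<subseteq> carrier G \<Longrightarrow> lprod G (filter (\<lambda>x. x \<noteq> \<one>) xs) = lprod G xs"
  by (induct xs) auto

lemma monoid_gen_one: "\<one> \<in> monoid_gen G Y"
  unfolding monoid_gen_def by (auto intro!: exI[of _ "[]"])

lemma monoid_gen_mult:
  assumes "Y \<subseteq> carrier G" "x \<in> monoid_gen G Y" "y \<in> monoid_gen G Y"
  shows "x \<otimes> y \<in> monoid_gen G Y"
proof -
  obtain xs ys where "set xs \<subseteq> Y" "x = lprod G xs" "set ys \<subseteq> Y" "y = lprod G ys"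
    using assms(2,3) unfolding monoid_gen_def by auto
  then show ?thesis
    using assms(1) lprod_append[of xs ys] unfolding monoid_gen_def by (auto intro!: exI[of _ "xs @ ys"])
qed

end

context group
begin

lemma inv_mult_cancel_left [simp]: "x \<in> carrier G \<Longrightarrow> y \<in> carrier G \<Longrightarrow> inv x \<otimes> (x \<otimes> y) = y"
  by (simp add: m_assoc[symmetric])

lemma mult_inv_cancel_left [simp]: "x \<in> carrier G \<Longrightarrow> y \<in> carrier G \<Longrightarrow> x \<otimes> (inv x \<otimes> y) = y"
  by (simp add: m_assoc[symmetric])

lemma lprod_conj:
  "g \<in> carrier G \<Longrightarrow> set xs \<subseteq> carrier G \<Longrightarrow>
   lprod G (map (\<lambda>x. inv g \<otimes> x \<otimes> g) xs) = inv g \<otimes> lprod G xs \<otimes> g"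
  by (induct xs) (simp_all add: m_assoc)

lemma monoid_gen_conj:
  assumes g: "g \<in> carrier G" and Y: "Y \<subseteq> carrier G"
    and conj: "\<And>s. s \<in> Y \<Longrightarrow> inv g \<otimes> s \<otimes> g \<in> Y" and x: "x \<in> monoid_gen G Y"
  shows "inv g \<otimes> x \<otimes> g \<in> monoid_gen G Y"
proof -
  obtain xs where xs: "set xs \<subseteq> Y" "x = lprod G xs"
    using x unfolding monoid_gen_def by auto
  then have "inv g \<otimes> x \<otimes> g = lprod G (map (\<lambda>x. inv g \<otimes> x \<otimes> g) xs)"
    using lprod_conj[OF g, of xs] Y by auto
  moreover have "set (map (\<lambda>x. inv g \<otimes> x \<otimes> g) xs) \<subseteq> Y"
    using xs conj by auto
  ultimately show ?thesis
    unfolding monoid_gen_def by blast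
qed

lemma gdist_mult_left:
  "h \<in> carrier G \<Longrightarrow> x \<in> carrier G \<Longrightarrow> y \<in> carrier G \<Longrightarrow> gdist G S (h \<otimes> x) (h \<otimes> y) = gdist G S x y"
  by (simp add: gdist_def inv_mult_group m_assoc)

lemma mem_proj_iff: "y \<in> proj G S H x \<longleftrightarrow> y \<in> H \<and> (\<forall>k\<in>H. gdist G S x y \<le> gdist G S x k)"
proof
  assume y: "y \<in> proj G S H x"
  have "setdist G S x H \<le> gdist G S x k" if "k \<in> H" for k
    unfolding setdist_def using that by (blast intro: Least_le)
  then show "y \<in> H \<and> (\<forall>k\<in>H. gdist G S x y \<le> gdist G S x k)"
    using y unfolding proj_def by simp
next
  assume y: "y \<in> H \<and> (\<forall>k\<in>H. gdist G S x y \<le> gdist G S x k)"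
  then have "setdist G S x H = gdist G S x y"
    unfolding setdist_def by (intro Least_equality) auto
  then show "y \<in> proj G S H x"
    using y unfolding proj_def by simp
qed

lemma proj_mult_left:
  assumes H: "subgroup H G" and h: "h \<in> H" and x: "x \<in> carrier G" and y: "y \<in> proj G S H x"
  shows "h \<otimes> y \<in> proj G S H (h \<otimes> x)"
proof -
  note Hc = subgroup.mem_carrier[OF H]
  have "y \<in> H \<and> (\<forall>k\<in>H. gdist G S x y \<le> gdist G S x k)"
    using y unfolding mem_proj_iff .
  then have yH: "y \<in> H" and ymin: "\<forall>k\<in>H. gdist G S x y \<le> gdist G S x k"
    by blast+
  have "gdist G S (h \<otimes> x) (h \<otimes> y) \<le> gdist G S (h \<otimes> x) k" if k: "k \<in> H" for k
  proof -
    have k': "inv h \<otimes> k \<in> H"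
      using subgroup.m_closed[OF H subgroup.m_inv_closed[OF H h] k] .
    have "gdist G S (h \<otimes> x) (h \<otimes> y) = gdist G S x y"
      by (rule gdist_mult_left[OF Hc[OF h] x Hc[OF yH]])
    also have "\<dots> \<le> gdist G S x (inv h \<otimes> k)"
      using ymin k' by blast
    also have "\<dots> = gdist G S (h \<otimes> x) (h \<otimes> (inv h \<otimes> k))"
      by (rule gdist_mult_left[OF Hc[OF h] x Hc[OF k'], symmetric])
    also have "\<dots> = gdist G S (h \<otimes> x) k"
      using Hc[OF h] Hc[OF k] by simp
    finally show ?thesis .
  qed
  moreover have "h \<otimes> y \<in> H"
    using subgroup.m_closed[OF H h yH] .
  ultimately show ?thesis
    unfolding mem_proj_iff by blast
qed

end

locale garside_group = group G for G (structure) +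
  fixes M :: "'a set" and \<Delta> :: 'a
  assumes garside: "garside G M \<Delta>"
begin

abbreviation le_L :: "'a \<Rightarrow> 'a \<Rightarrow> bool" (infix "\<preceq>" 50)
  where "x \<preceq> y \<equiv> leL G M x y"

abbreviation meet_L :: "'a \<Rightarrow> 'a \<Rightarrow> 'a" (infixl "\<curlywedge>" 75)
  where "x \<curlywedge> y \<equiv> meetL G M x y"

definition join_L :: "'a \<Rightarrow> 'a \<Rightarrow> 'a" (infixl "\<curlyvee>" 75)
  where "x \<curlyvee> y = (THE j. is_joinL G M x y j)"

abbreviation Delta_pow :: "nat \<Rightarrow> 'a" ("\<Delta>\<^bsup>_\<^esup>" [0] 1000)
  where "\<Delta>\<^bsup>k\<^esup> \<equiv> \<Delta> [^] k"

definition left_coprime :: "'a \<Rightarrow> 'a \<Rightarrow> bool"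
  where "left_coprime a b \<longleftrightarrow> (\<forall>c\<in>carrier G. c \<preceq> a \<longrightarrow> c \<preceq> b \<longrightarrow> c \<preceq> \<one>)"

lemma submonoid_M: "submonoid M G"
  using garside unfolding garside_def by auto

lemma M_carrier [intro]: "x \<in> M \<Longrightarrow> x \<in> carrier G"
  using submonoid.subset[OF submonoid_M] by auto

lemma M_one [simp, intro]: "\<one> \<in> M"
  using submonoid.one_closed[OF submonoid_M] .

lemma M_mult [simp, intro]: "x \<in> M \<Longrightarrow> y \<in> M \<Longrightarrow> x \<otimes> y \<in> M"
  using submonoid.m_closed[OF submonoid_M] .

lemma M_inv_eq_one: assumes "x \<in> M" "inv x \<in> M" shows "x = \<one>"
proof -
  have "M \<inter> (\<lambda>x. inv x) ` M = {\<one>}"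
    using garside unfolding garside_def by auto
  moreover have "x = inv (inv x)"
    using assms M_carrier by simp
  ultimately show ?thesis
    using assms by blast
qed

lemma Delta_balanced: "balanced G M \<Delta>"
  using garside unfolding garside_def by auto

lemma monoid_gen_Div_Delta: "monoid_gen G (Div G M \<Delta>) = M"
  using garside unfolding garside_def by auto

lemma generate_Div_Delta: "generate G (Div G M \<Delta>) = carrier G"
  using garside unfolding garside_def by auto

lemma lattice_L:
  "x \<in> carrier G \<Longrightarrow> y \<in> carrier G \<Longrightarrow> (\<exists>m. is_meetL G M x y m) \<and> (\<exists>j. is_joinL G M x y j)"
  using garside unfolding garside_def by auto

subsection \<open>The prefix order\<close>

lemma le_L_iff: "x \<preceq> y \<longleftrightarrow> inv x \<otimes> y \<in> M"
  by (simp add: leL_def)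

lemma le_L_refl [simp]: "x \<in> carrier G \<Longrightarrow> x \<preceq> x"
  by (simp add: le_L_iff)

lemma le_L_trans:
  assumes "x \<in> carrier G" "y \<in> carrier G" "z \<in> carrier G" "x \<preceq> y" "y \<preceq> z"
  shows "x \<preceq> z"
proof -
  have "(inv x \<otimes> y) \<otimes> (inv y \<otimes> z) \<in> M"
    using assms by (auto simp: le_L_iff)
  then show ?thesis
    using assms by (simp add: le_L_iff m_assoc)
qed

lemma le_L_antisym:
  assumes "x \<in> carrier G" "y \<in> carrier G" "x \<preceq> y" "y \<preceq> x"
  shows "x = y"
proof -
  have "inv (inv x \<otimes> y) = inv y \<otimes> x"
    using assms by (simp add: inv_mult_group)
  then have "inv x \<otimes> y = \<one>"
    using M_inv_eq_one assms by (simp add: le_L_iff)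
  then have "x \<otimes> (inv x \<otimes> y) = x"
    using assms by simp
  then show ?thesis
    using assms by simp
qed

lemma le_L_mult_left_iff [simp]:
  "g \<in> carrier G \<Longrightarrow> x \<in> carrier G \<Longrightarrow> y \<in> carrier G \<Longrightarrow> g \<otimes> x \<preceq> g \<otimes> y \<longleftrightarrow> x \<preceq> y"
  by (simp add: le_L_iff inv_mult_group m_assoc)

lemma one_le_L_iff [simp]: "x \<in> carrier G \<Longrightarrow> \<one> \<preceq> x \<longleftrightarrow> x \<in> M"
  by (simp add: le_L_iff)

lemma le_L_one_iff: "x \<in> carrier G \<Longrightarrow> x \<preceq> \<one> \<longleftrightarrow> inv x \<in> M"
  by (simp add: le_L_iff)

lemma le_L_mult_M: "x \<in> carrier G \<Longrightarrow> m \<in> M \<Longrightarrow> x \<preceq> x \<otimes> m"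
  by (simp add: le_L_iff M_carrier)

lemma M_le_L_closed: "x \<in> M \<Longrightarrow> y \<in> carrier G \<Longrightarrow> x \<preceq> y \<Longrightarrow> y \<in> M"
  using M_mult[of x "inv x \<otimes> y"] by (auto simp: le_L_iff M_carrier)

lemma le_L_one_in_M: "x \<in> M \<Longrightarrow> x \<preceq> \<one> \<Longrightarrow> x = \<one>"
  using M_inv_eq_one by (auto simp: le_L_one_iff M_carrier)

lemma left_coprime_sym: "left_coprime a b \<longleftrightarrow> left_coprime b a"
  unfolding left_coprime_def by blast

subsection \<open>Balanced elements\<close>

lemma Div_iff: "s \<in> Div G M d \<longleftrightarrow> s \<in> M \<and> s \<preceq> d"
  by (simp add: Div_def DivL_def)

lemma Div_carrier: "s \<in> Div G M d \<Longrightarrow> s \<in> carrier G"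
  by (auto simp: Div_iff)

lemma balanced_in_M: "balanced G M d \<Longrightarrow> d \<in> M"
  by (simp add: balanced_def)

lemma balanced_Div_iff_right: "balanced G M d \<Longrightarrow> s \<in> Div G M d \<longleftrightarrow> s \<in> M \<and> d \<otimes> inv s \<in> M"
  by (simp add: balanced_def Div_def DivR_def leR_def)

lemma balanced_self_Div: "balanced G M d \<Longrightarrow> d \<in> Div G M d"
  using balanced_in_M by (simp add: Div_iff M_carrier)

lemma Div_complement_left:
  assumes d: "balanced G M d" and s: "s \<in> Div G M d"
  shows "inv s \<otimes> d \<in> Div G M d"
proof -
  have c: "s \<in> carrier G" "d \<in> carrier G"
    using s d balanced_in_M by (auto simp: Div_iff M_carrier)
  have "d \<otimes> inv (inv s \<otimes> d) = s"
    using c by (simp add: inv_mult_group m_assoc[symmetric])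
  then show ?thesis
    using s c balanced_Div_iff_right[OF d] by (auto simp: Div_iff le_L_iff)
qed

lemma Div_complement_right:
  assumes d: "balanced G M d" and s: "s \<in> Div G M d"
  shows "d \<otimes> inv s \<in> Div G M d"
proof -
  have c: "s \<in> carrier G" "d \<in> carrier G"
    using s d balanced_in_M by (auto simp: Div_iff M_carrier)
  have "inv (d \<otimes> inv s) \<otimes> d = s"
    using c by (simp add: inv_mult_group m_assoc)
  then show ?thesis
    using s c balanced_Div_iff_right[OF d] by (auto simp: Div_iff le_L_iff)
qed

lemma Div_conj_pow:
  assumes d: "balanced G M d" and s: "s \<in> Div G M d"
  shows "inv (d [^] k) \<otimes> s \<otimes> d [^] (k::nat) \<in> Div G M d"
  using s
proof (induct k arbitrary: s)
  case 0
  then show ?case by (simp add: Div_carrier)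
next
  case (Suc k)
  have c: "s \<in> carrier G" "d \<in> carrier G"
    using Suc d balanced_in_M by (auto simp: Div_carrier M_carrier)
  have "inv (d [^] Suc k) \<otimes> s \<otimes> d [^] Suc k = inv (inv (inv (d [^] k) \<otimes> s \<otimes> d [^] k) \<otimes> d) \<otimes> d"
    using c by (simp add: inv_mult_group m_assoc nat_pow_Suc2)
  then show ?case
    using Div_complement_left[OF d] Suc by simp
qed

lemma Div_conj_pow_inv:
  assumes d: "balanced G M d" and s: "s \<in> Div G M d"
  shows "d [^] k \<otimes> s \<otimes> inv (d [^] (k::nat)) \<in> Div G M d"
  using s
proof (induct k arbitrary: s)
  case 0
  then show ?case by (simp add: Div_carrier)
next
  case (Suc k)
  have c: "s \<in> carrier G" "d \<in> carrier G"
    using Suc d balanced_in_M by (auto simp: Div_carrier M_carrier)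
  have "d [^] Suc k \<otimes> s \<otimes> inv (d [^] Suc k) = d [^] k \<otimes> (d \<otimes> inv (d \<otimes> inv s)) \<otimes> inv (d [^] k)"
    using c by (simp add: inv_mult_group m_assoc nat_pow_Suc2)
  then show ?case
    using Div_complement_right[OF d] Suc by simp
qed

lemma monoid_gen_conj_pow:
  assumes d: "balanced G M d" and x: "x \<in> monoid_gen G (Div G M d)"
  shows "inv (d [^] k) \<otimes> x \<otimes> d [^] (k::nat) \<in> monoid_gen G (Div G M d)"
proof -
  have "d \<in> carrier G" and "Div G M d \<subseteq> carrier G"
    using balanced_in_M[OF d] Div_carrier by auto
  then show ?thesis
    using monoid_gen_conj[OF nat_pow_closed _ Div_conj_pow[OF d] x] by simp
qed

lemma monoid_gen_conj_pow_inv: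
  assumes d: "balanced G M d" and x: "x \<in> monoid_gen G (Div G M d)"
  shows "d [^] k \<otimes> x \<otimes> inv (d [^] (k::nat)) \<in> monoid_gen G (Div G M d)"
proof -
  have dc: "d \<in> carrier G" and "Div G M d \<subseteq> carrier G"
    using balanced_in_M[OF d] Div_carrier by auto
  moreover have "inv (inv (d [^] k)) \<otimes> s \<otimes> inv (d [^] k) \<in> Div G M d" if "s \<in> Div G M d" for s
    using Div_conj_pow_inv[OF d that, of k] dc by simp
  ultimately have "inv (inv (d [^] k)) \<otimes> x \<otimes> inv (d [^] k) \<in> monoid_gen G (Div G M d)"
    using monoid_gen_conj[OF inv_closed[OF nat_pow_closed] _ _ x] by simp
  then show ?thesis
    using dc by simp
qed

lemma pow_in_M: "d \<in> M \<Longrightarrow> d [^] (k::nat) \<in> M"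
  by (induct k) simp_all

lemma pow_mono_L:
  assumes d: "d \<in> M" and jk: "j \<le> k"
  shows "d [^] j \<preceq> d [^] (k::nat)"
proof -
  obtain e where e: "k = j + e"
    using jk le_Suc_ex by blast
  have "inv (d [^] j) \<otimes> d [^] k = d [^] e"
    using M_carrier[OF d] by (simp add: e nat_pow_mult[symmetric])
  then show ?thesis
    using pow_in_M[OF d] by (simp add: le_L_iff)
qed

lemma Div_mult_le_pow_Suc:
  assumes d: "balanced G M d" and s: "s \<in> Div G M d" and y: "y \<in> carrier G" and le: "y \<preceq> d [^] k"
  shows "s \<otimes> y \<preceq> d [^] Suc k"
proof -
  have c: "s \<in> carrier G" "d \<in> carrier G"
    using s d balanced_in_M Div_carrier by auto
  have "d [^] k \<otimes> d = d \<otimes> d [^] k"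
    using nat_pow_comm[of d k 1] c by simp
  then have "inv (s \<otimes> y) \<otimes> d [^] Suc k = (inv y \<otimes> d [^] k) \<otimes> (inv (d [^] k) \<otimes> (inv s \<otimes> d) \<otimes> d [^] k)"
    using c y by (simp add: m_assoc inv_mult_group)
  moreover have "inv (d [^] k) \<otimes> (inv s \<otimes> d) \<otimes> d [^] k \<in> M"
    using Div_conj_pow[OF d Div_complement_left[OF d s]] by (simp add: Div_iff)
  ultimately show ?thesis
    using le by (simp add: le_L_iff)
qed

lemma monoid_gen_le_pow:
  assumes d: "balanced G M d" and x: "x \<in> monoid_gen G (Div G M d)"
  shows "\<exists>k. x \<preceq> d [^] (k::nat)"
proof -
  obtain xs where xs: "set xs \<subseteq> Div G M d" "x = lprod G xs"
    using x unfolding monoid_gen_def by auto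
  have "lprod G xs \<preceq> d [^] length xs"
    using xs(1)
  proof (induct xs)
    case Nil
    then show ?case by simp
  next
    case (Cons s xs)
    then have "lprod G xs \<in> carrier G"
      using Div_carrier by auto
    then show ?case
      using Cons Div_mult_le_pow_Suc[OF d] by simp
  qed
  then show ?thesis
    using xs by auto
qed

subsection \<open>Powers of \<open>\<Delta>\<close>\<close>

lemma Delta_in_M [simp, intro]: "\<Delta> \<in> M"
  using balanced_in_M[OF Delta_balanced] .

lemma Delta_carrier [simp, intro]: "\<Delta> \<in> carrier G"
  using M_carrier by auto

lemma Div_Delta_iff: "s \<in> Div G M \<Delta> \<longleftrightarrow> s \<in> M \<and> inv s \<otimes> \<Delta> \<in> M"
  by (simp add: Div_iff le_L_iff)

lemma Delta_pow_conj_M_iff: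
  assumes x: "x \<in> carrier G"
  shows "inv (\<Delta>\<^bsup>k\<^esup>) \<otimes> x \<otimes> \<Delta>\<^bsup>k\<^esup> \<in> M \<longleftrightarrow> x \<in> M"
proof
  assume "inv (\<Delta>\<^bsup>k\<^esup>) \<otimes> x \<otimes> \<Delta>\<^bsup>k\<^esup> \<in> M"
  then have "\<Delta>\<^bsup>k\<^esup> \<otimes> (inv (\<Delta>\<^bsup>k\<^esup>) \<otimes> x \<otimes> \<Delta>\<^bsup>k\<^esup>) \<otimes> inv (\<Delta>\<^bsup>k\<^esup>) \<in> M"
    using monoid_gen_conj_pow_inv[OF Delta_balanced] monoid_gen_Div_Delta by simp
  then show "x \<in> M"
    using x by (simp add: m_assoc)
qed (use monoid_gen_conj_pow[OF Delta_balanced] monoid_gen_Div_Delta in simp)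

lemma Delta_pow_Suc_left: "\<Delta>\<^bsup>Suc k\<^esup> = \<Delta> \<otimes> \<Delta>\<^bsup>k\<^esup>"
  by (rule nat_pow_Suc2) simp

lemma Delta_pow_in_M [simp, intro]: "\<Delta>\<^bsup>k\<^esup> \<in> M"
  using pow_in_M by simp

lemma le_L_mult_right_Delta_pow_iff:
  assumes "x \<in> carrier G" "y \<in> carrier G"
  shows "x \<otimes> \<Delta>\<^bsup>k\<^esup> \<preceq> y \<otimes> \<Delta>\<^bsup>k\<^esup> \<longleftrightarrow> x \<preceq> y"
proof -
  have "inv (x \<otimes> \<Delta>\<^bsup>k\<^esup>) \<otimes> (y \<otimes> \<Delta>\<^bsup>k\<^esup>) = inv (\<Delta>\<^bsup>k\<^esup>) \<otimes> (inv x \<otimes> y) \<otimes> \<Delta>\<^bsup>k\<^esup>"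
    using assms by (simp add: inv_mult_group m_assoc)
  then show ?thesis
    using Delta_pow_conj_M_iff assms by (simp add: le_L_iff)
qed

lemma M_le_Delta_pow: "x \<in> M \<Longrightarrow> \<exists>k. x \<preceq> \<Delta>\<^bsup>k\<^esup>"
  using monoid_gen_le_pow[OF Delta_balanced] monoid_gen_Div_Delta by simp

lemma Div_Delta_mult_le: "s \<in> Div G M \<Delta> \<Longrightarrow> y \<in> carrier G \<Longrightarrow> y \<preceq> \<Delta>\<^bsup>k\<^esup> \<Longrightarrow> s \<otimes> y \<preceq> \<Delta>\<^bsup>Suc k\<^esup>"
  using Div_mult_le_pow_Suc[OF Delta_balanced] .

lemma mult_Div_Delta_le:
  assumes u: "u \<in> Div G M \<Delta>" and y: "y \<in> carrier G" and le: "y \<preceq> \<Delta>\<^bsup>k\<^esup>"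
  shows "y \<otimes> u \<preceq> \<Delta>\<^bsup>Suc k\<^esup>"
proof -
  have "inv (y \<otimes> u) \<otimes> \<Delta>\<^bsup>Suc k\<^esup> = (inv u \<otimes> \<Delta>) \<otimes> (inv (\<Delta>\<^bsup>1\<^esup>) \<otimes> (inv y \<otimes> \<Delta>\<^bsup>k\<^esup>) \<otimes> \<Delta>\<^bsup>1\<^esup>)"
    using u y Div_carrier by (simp add: m_assoc inv_mult_group)
  then show ?thesis
    using u y le Delta_pow_conj_M_iff[of "inv y \<otimes> \<Delta>\<^bsup>k\<^esup>" 1] by (simp add: le_L_iff Div_Delta_iff)
qed

lemma le_Delta_pow_right_factor:
  assumes b: "b \<in> M" and t: "t \<in> carrier G" and le: "b \<otimes> t \<preceq> \<Delta>\<^bsup>k\<^esup>"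
  shows "t \<preceq> \<Delta>\<^bsup>k\<^esup>"
proof -
  have "inv t \<otimes> \<Delta>\<^bsup>k\<^esup> = (inv (b \<otimes> t) \<otimes> \<Delta>\<^bsup>k\<^esup>) \<otimes> (inv (\<Delta>\<^bsup>k\<^esup>) \<otimes> b \<otimes> \<Delta>\<^bsup>k\<^esup>)"
    using M_carrier[OF b] t by (simp add: m_assoc inv_mult_group)
  then show ?thesis
    using le b Delta_pow_conj_M_iff[of b k] by (auto simp: le_L_iff)
qed

subsection \<open>Meets, joins and left coprimality\<close>

lemma meet_L_is: "x \<in> carrier G \<Longrightarrow> y \<in> carrier G \<Longrightarrow> is_meetL G M x y (x \<curlywedge> y)"
  unfolding meetL_def
  by (rule theI') (use lattice_L le_L_antisym in \<open>auto simp: is_meetL_def\<close>)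

lemma join_L_is: "x \<in> carrier G \<Longrightarrow> y \<in> carrier G \<Longrightarrow> is_joinL G M x y (x \<curlyvee> y)"
  unfolding join_L_def
  by (rule theI') (use lattice_L le_L_antisym in \<open>auto simp: is_joinL_def\<close>)

lemma
  assumes "x \<in> carrier G" "y \<in> carrier G"
  shows meet_L_closed [simp]: "x \<curlywedge> y \<in> carrier G"
    and meet_L_le1: "x \<curlywedge> y \<preceq> x"
    and meet_L_le2: "x \<curlywedge> y \<preceq> y"
    and meet_L_greatest: "c \<in> carrier G \<Longrightarrow> c \<preceq> x \<Longrightarrow> c \<preceq> y \<Longrightarrow> c \<preceq> x \<curlywedge> y"
  using meet_L_is[OF assms] unfolding is_meetL_def by auto

lemma
  assumes "x \<in> carrier G" "y \<in> carrier G"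
  shows join_L_closed [simp]: "x \<curlyvee> y \<in> carrier G"
    and le_join_L1: "x \<preceq> x \<curlyvee> y"
    and le_join_L2: "y \<preceq> x \<curlyvee> y"
    and join_L_least: "c \<in> carrier G \<Longrightarrow> x \<preceq> c \<Longrightarrow> y \<preceq> c \<Longrightarrow> x \<curlyvee> y \<preceq> c"
  using join_L_is[OF assms] unfolding is_joinL_def by auto

lemma meet_L_in_M: "x \<in> M \<Longrightarrow> y \<in> M \<Longrightarrow> x \<curlywedge> y \<in> M"
  using meet_L_greatest[of x y \<one>] by (auto simp: M_carrier)

lemma left_coprime_of_meet_one:
  "x \<in> carrier G \<Longrightarrow> y \<in> carrier G \<Longrightarrow> x \<curlywedge> y = \<one> \<Longrightarrow> left_coprime x y"
  unfolding left_coprime_def by (metis meet_L_greatest)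

lemma left_coprime_meet_quotients:
  assumes x: "x \<in> carrier G" and y: "y \<in> carrier G"
  shows "left_coprime (inv (x \<curlywedge> y) \<otimes> x) (inv (x \<curlywedge> y) \<otimes> y)"
  unfolding left_coprime_def
proof (intro ballI impI)
  let ?g = "x \<curlywedge> y"
  fix c assume c: "c \<in> carrier G" "c \<preceq> inv ?g \<otimes> x" "c \<preceq> inv ?g \<otimes> y"
  have gc: "?g \<in> carrier G"
    using x y by simp
  have "?g \<otimes> c \<preceq> ?g \<otimes> (inv ?g \<otimes> x)" "?g \<otimes> c \<preceq> ?g \<otimes> (inv ?g \<otimes> y)"
    using c gc x y by (subst le_L_mult_left_iff; simp)+
  then have "?g \<otimes> c \<preceq> x" "?g \<otimes> c \<preceq> y"
    using gc x y by simp_all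
  then have "?g \<otimes> c \<preceq> ?g"
    using meet_L_greatest[OF x y, of "?g \<otimes> c"] c gc by simp
  then show "c \<preceq> \<one>"
    using le_L_mult_left_iff[OF gc c(1) one_closed] gc by simp
qed

lemma coprime_le_mult_Delta_pow:
  assumes a: "a \<in> M" and b: "b \<in> M" and cop: "left_coprime a b" and le: "b \<preceq> a \<otimes> \<Delta>\<^bsup>p\<^esup>"
  shows "b \<preceq> \<Delta>\<^bsup>p\<^esup>"
proof -
  have ac: "a \<in> carrier G" and bc: "b \<in> carrier G"
    using a b by auto
  define j where "j = b \<curlyvee> \<Delta>\<^bsup>p\<^esup>"
  have jc: "j \<in> carrier G"
    using bc by (simp add: j_def)
  have "\<Delta>\<^bsup>p\<^esup> \<preceq> x \<otimes> \<Delta>\<^bsup>p\<^esup>" if "x \<in> M" for x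
    using that Delta_pow_conj_M_iff[of x p] by (auto simp: le_L_iff m_assoc)
  then have "j \<preceq> a \<otimes> \<Delta>\<^bsup>p\<^esup>" "j \<preceq> b \<otimes> \<Delta>\<^bsup>p\<^esup>"
    using join_L_least[of b "\<Delta>\<^bsup>p\<^esup>"] le le_L_mult_M[of b "\<Delta>\<^bsup>p\<^esup>"] a b ac bc by (auto simp: j_def)
  moreover have j_eq: "j = (j \<otimes> inv (\<Delta>\<^bsup>p\<^esup>)) \<otimes> \<Delta>\<^bsup>p\<^esup>"
    using jc by (simp add: m_assoc)
  ultimately have "j \<otimes> inv (\<Delta>\<^bsup>p\<^esup>) \<preceq> a" "j \<otimes> inv (\<Delta>\<^bsup>p\<^esup>) \<preceq> b"
    using le_L_mult_right_Delta_pow_iff[of "j \<otimes> inv (\<Delta>\<^bsup>p\<^esup>)"] ac bc jc by (metis m_closed inv_closed Delta_pow_in_M M_carrier)+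
  then have "j \<otimes> inv (\<Delta>\<^bsup>p\<^esup>) \<preceq> \<one>"
    using cop jc unfolding left_coprime_def by auto
  moreover have "\<one> \<otimes> \<Delta>\<^bsup>p\<^esup> \<preceq> j \<otimes> inv (\<Delta>\<^bsup>p\<^esup>) \<otimes> \<Delta>\<^bsup>p\<^esup>"
    using le_join_L2[OF bc] j_def j_eq by simp
  then have "\<one> \<preceq> j \<otimes> inv (\<Delta>\<^bsup>p\<^esup>)"
    using le_L_mult_right_Delta_pow_iff jc by (metis one_closed m_closed inv_closed Delta_pow_in_M M_carrier)
  ultimately have "j = \<Delta>\<^bsup>p\<^esup>"
    using le_L_antisym[of "j \<otimes> inv (\<Delta>\<^bsup>p\<^esup>)" \<one>] jc j_eq by simp
  then show ?thesis
    using le_join_L1[OF bc, of "\<Delta>\<^bsup>p\<^esup>"] j_def by simp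
qed

lemma head_factor:
  assumes m: "m \<in> M" and le: "m \<preceq> \<Delta>\<^bsup>Suc k\<^esup>"
  shows "m \<curlywedge> \<Delta> \<in> Div G M \<Delta>" "inv (m \<curlywedge> \<Delta>) \<otimes> m \<in> M" "inv (m \<curlywedge> \<Delta>) \<otimes> m \<preceq> \<Delta>\<^bsup>k\<^esup>"
proof -
  define s where "s = m \<curlywedge> \<Delta>"
  have mc: "m \<in> carrier G"
    using m by blast
  then have sc: "s \<in> carrier G"
    by (simp add: s_def)
  have sm: "s \<preceq> m" and sD: "s \<preceq> \<Delta>"
    using meet_L_le1 meet_L_le2 mc by (auto simp: s_def)
  show "s \<in> Div G M \<Delta>"
    using meet_L_in_M[OF m Delta_in_M] sD by (simp add: Div_iff s_def)
  show m1: "inv s \<otimes> m \<in> M"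
    using sm by (simp add: le_L_iff)
  have aM: "inv s \<otimes> \<Delta> \<in> M"
    using sD by (simp add: le_L_iff)
  have "m \<preceq> \<Delta> \<otimes> \<Delta>\<^bsup>k\<^esup>"
    using le unfolding Delta_pow_Suc_left .
  then have "inv s \<otimes> m \<preceq> (inv s \<otimes> \<Delta>) \<otimes> \<Delta>\<^bsup>k\<^esup>"
    using sc mc by (simp add: le_L_iff inv_mult_group m_assoc)
  then show "inv s \<otimes> m \<preceq> \<Delta>\<^bsup>k\<^esup>"
    using coprime_le_mult_Delta_pow[OF aM m1] left_coprime_meet_quotients[OF mc Delta_carrier]
    by (simp add: left_coprime_sym s_def)
qed

lemma M_coprime_Delta_eq_one:
  assumes m: "m \<in> M" and cop: "left_coprime m \<Delta>"
  shows "m = \<one>"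
proof -
  have mc: "m \<in> carrier G"
    using m by auto
  have "m \<curlywedge> \<Delta> \<preceq> \<one>"
    using cop meet_L_le1 meet_L_le2 mc unfolding left_coprime_def by simp
  then have head: "m \<curlywedge> \<Delta> = \<one>"
    using le_L_one_in_M meet_L_in_M[OF m Delta_in_M] by blast
  have "m \<preceq> \<Delta>\<^bsup>k\<^esup> \<Longrightarrow> m \<preceq> \<Delta>\<^bsup>0\<^esup>" for k
    by (induct k) (use head_factor[OF m] head mc in auto)
  then show ?thesis
    using M_le_Delta_pow[OF m] le_L_one_in_M[OF m] by auto
qed

lemma M_le_Delta_pow_lprod:
  "y \<in> M \<Longrightarrow> y \<preceq> \<Delta>\<^bsup>n\<^esup> \<Longrightarrow> \<exists>xs. length xs = n \<and> set xs \<subseteq> Div G M \<Delta> \<and> lprod G xs = y"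
proof (induct n arbitrary: y)
  case 0
  then show ?case
    using le_L_one_in_M by auto
next
  case (Suc n)
  let ?s = "y \<curlywedge> \<Delta>"
  obtain xs where "length xs = n" "set xs \<subseteq> Div G M \<Delta>" "lprod G xs = inv ?s \<otimes> y"
    using Suc.hyps head_factor[OF Suc.prems] by blast
  moreover have "?s \<otimes> (inv ?s \<otimes> y) = y"
    using M_carrier[OF Suc.prems(1)] by simp
  ultimately show ?case
    using head_factor(1)[OF Suc.prems] by (intro exI[of _ "?s # xs"]) auto
qed

subsection \<open>Word length\<close>

abbreviation S :: "'a set"
  where "S \<equiv> Div G M \<Delta> - {\<one>}"

abbreviation simple_letters :: "'a set"
  where "simple_letters \<equiv> Div G M \<Delta> \<union> (\<lambda>x. inv x) ` Div G M \<Delta>"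

lemma simple_letters_carrier: "simple_letters \<subseteq> carrier G"
  using Div_carrier by auto

lemma word_drop_ones:
  assumes xs: "set xs \<subseteq> simple_letters"
  shows "\<exists>ys. length ys \<le> length xs \<and> set ys \<subseteq> S \<union> (\<lambda>x. inv x) ` S \<and> lprod G ys = lprod G xs"
proof (intro exI conjI)
  let ?ys = "filter (\<lambda>x. x \<noteq> \<one>) xs"
  show "length ?ys \<le> length xs"
    by simp
  show "set ?ys \<subseteq> S \<union> (\<lambda>x. inv x) ` S"
  proof
    fix x assume "x \<in> set ?ys"
    then have x: "x \<in> simple_letters" "x \<noteq> \<one>"
      using xs by auto
    show "x \<in> S \<union> (\<lambda>x. inv x) ` S"
    proof (cases "x \<in> Div G M \<Delta>")
      case True
      then show ?thesis using x by blast
    next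
      case False
      then obtain s where s: "s \<in> Div G M \<Delta>" "x = inv s"
        using x by blast
      then have "s \<noteq> \<one>"
        using x by auto
      then show ?thesis
        using s by blast
    qed
  qed
  show "lprod G ?ys = lprod G xs"
    using xs simple_letters_carrier by (intro lprod_filter_one) blast
qed

lemma wlen_le_length:
  assumes "set xs \<subseteq> simple_letters"
  shows "wlen G S (lprod G xs) \<le> length xs"
proof -
  obtain ys where ys: "length ys \<le> length xs" "set ys \<subseteq> S \<union> (\<lambda>x. inv x) ` S" "lprod G ys = lprod G xs"
    using word_drop_ones[OF assms] by blast
  then have "wlen G S (lprod G xs) \<le> length ys"
    unfolding wlen_def by (intro Least_le) blast
  then show ?thesis
    using ys(1) by simp
qed

lemma word_exists: "z \<in> carrier G \<Longrightarrow> \<exists>xs. set xs \<subseteq> simple_letters \<and> lprod G xs = z"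
proof -
  assume "z \<in> carrier G"
  then have "z \<in> generate G (Div G M \<Delta>)"
    using generate_Div_Delta by simp
  then show ?thesis
  proof (induct rule: generate.induct)
    case one
    show ?case by (intro exI[of _ "[]"]) simp
  next
    case (incl h)
    then show ?case by (intro exI[of _ "[h]"]) (simp add: Div_carrier)
  next
    case (inv h)
    then show ?case by (intro exI[of _ "[inv h]"]) (simp add: Div_carrier)
  next
    case (eng h1 h2)
    then obtain xs ys where "set xs \<subseteq> simple_letters" "lprod G xs = h1"
      "set ys \<subseteq> simple_letters" "lprod G ys = h2"
      by blast
    then show ?case
      using lprod_append[of xs ys] simple_letters_carrier by (intro exI[of _ "xs @ ys"]) auto
  qed
qed

lemma wlen_attained:
  assumes z: "z \<in> carrier G"
  shows "\<exists>xs. length xs = wlen G S z \<and> set xs \<subseteq> simple_letters \<and> lprod G xs = z"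
proof -
  define P where "P n \<longleftrightarrow> (\<exists>xs. length xs = n \<and> set xs \<subseteq> S \<union> (\<lambda>x. inv x) ` S \<and> lprod G xs = z)" for n
  obtain xs where "set xs \<subseteq> simple_letters" "lprod G xs = z"
    using word_exists[OF z] by blast
  then have "P (length ys)" if "length ys \<le> length xs" "set ys \<subseteq> S \<union> (\<lambda>x. inv x) ` S" "lprod G ys = lprod G xs" for ys
    using that by (auto simp: P_def)
  then have "\<exists>n. P n"
    using word_drop_ones[OF \<open>set xs \<subseteq> simple_letters\<close>] by blast
  then have "P (LEAST n. P n)"
    by (rule LeastI_ex)
  moreover have "wlen G S z = (LEAST n. P n)"
    unfolding wlen_def P_def by simp
  ultimately show ?thesis
    unfolding P_def by auto
qed

lemma word_Delta_bounds:
  assumes "set xs \<subseteq> simple_letters"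
  shows "\<exists>P Q. P + Q = length xs \<and> lprod G xs \<preceq> \<Delta>\<^bsup>P\<^esup> \<and> inv (lprod G xs) \<preceq> \<Delta>\<^bsup>Q\<^esup>"
  using assms
proof (induct xs)
  case Nil
  then show ?case by (auto simp: le_L_iff)
next
  case (Cons a xs)
  then obtain P Q where PQ: "P + Q = length xs" "lprod G xs \<preceq> \<Delta>\<^bsup>P\<^esup>" "inv (lprod G xs) \<preceq> \<Delta>\<^bsup>Q\<^esup>"
    by auto
  define y where "y = lprod G xs"
  have yc: "y \<in> carrier G"
    unfolding y_def using Cons.prems simple_letters_carrier by (intro lprod_closed) auto
  have yP: "inv y \<otimes> \<Delta>\<^bsup>P\<^esup> \<in> M" and yQ: "y \<otimes> \<Delta>\<^bsup>Q\<^esup> \<in> M"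
    using PQ yc by (simp_all add: le_L_iff y_def)
  show ?case
  proof (cases "a \<in> Div G M \<Delta>")
    case True
    then have aM: "a \<in> M" and ac: "a \<in> carrier G"
      by (auto simp: Div_iff)
    have "a \<otimes> y \<preceq> \<Delta>\<^bsup>Suc P\<^esup>"
      using Div_Delta_mult_le[OF True yc] PQ(2) by (simp add: y_def)
    moreover have "inv (a \<otimes> y) \<preceq> \<Delta>\<^bsup>Q\<^esup>"
      using yQ aM ac yc by (simp add: le_L_iff m_assoc)
    ultimately show ?thesis
      using PQ(1) by (intro exI[of _ "Suc P"] exI[of _ Q]) (simp add: y_def)
  next
    case False
    then obtain s where s: "s \<in> Div G M \<Delta>" "a = inv s"
      using Cons.prems by auto
    then have sM: "s \<in> M" and sc: "s \<in> carrier G" and sD: "inv s \<otimes> \<Delta> \<in> M"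
      by (auto simp: Div_Delta_iff)
    have "inv (inv s \<otimes> y) \<otimes> \<Delta>\<^bsup>P\<^esup> = (inv y \<otimes> \<Delta>\<^bsup>P\<^esup>) \<otimes> (inv (\<Delta>\<^bsup>P\<^esup>) \<otimes> s \<otimes> \<Delta>\<^bsup>P\<^esup>)"
      using sc yc by (simp add: m_assoc inv_mult_group)
    then have "inv s \<otimes> y \<preceq> \<Delta>\<^bsup>P\<^esup>"
      using yP sM sc Delta_pow_conj_M_iff[of s P] by (simp add: le_L_iff)
    moreover have "inv (inv (inv s \<otimes> y)) \<otimes> \<Delta>\<^bsup>Suc Q\<^esup> = (inv s \<otimes> \<Delta>) \<otimes> (inv (\<Delta>\<^bsup>1\<^esup>) \<otimes> (y \<otimes> \<Delta>\<^bsup>Q\<^esup>) \<otimes> \<Delta>\<^bsup>1\<^esup>)"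
      using sc yc by (simp add: m_assoc inv_mult_group)
    then have "inv (inv s \<otimes> y) \<preceq> \<Delta>\<^bsup>Suc Q\<^esup>"
      using yQ sD yc Delta_pow_conj_M_iff[of "y \<otimes> \<Delta>\<^bsup>Q\<^esup>" 1] by (simp add: le_L_iff)
    ultimately show ?thesis
      using PQ(1) s by (intro exI[of _ P] exI[of _ "Suc Q"]) (simp add: y_def)
  qed
qed

lemma Delta_pow_inv_mult_lprod:
  assumes "set xs \<subseteq> Div G M \<Delta>"
  shows "\<exists>ys. length ys = length xs \<and> set ys \<subseteq> (\<lambda>x. inv x) ` Div G M \<Delta> \<and>
           lprod G ys = inv (\<Delta>\<^bsup>length xs\<^esup>) \<otimes> lprod G xs"
  using assms
proof (induct xs)
  case Nil
  then show ?case by simp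
next
  case (Cons x xs)
  let ?n = "length xs"
  obtain ys where ys: "length ys = ?n" "set ys \<subseteq> (\<lambda>x. inv x) ` Div G M \<Delta>"
    "lprod G ys = inv (\<Delta>\<^bsup>?n\<^esup>) \<otimes> lprod G xs"
    using Cons by auto
  have x: "x \<in> Div G M \<Delta>" and xc: "x \<in> carrier G" and xsc: "lprod G xs \<in> carrier G"
    using Cons.prems Div_carrier by auto
  define t where "t = inv (\<Delta>\<^bsup>?n\<^esup>) \<otimes> (inv x \<otimes> \<Delta>) \<otimes> \<Delta>\<^bsup>?n\<^esup>"
  have t: "t \<in> Div G M \<Delta>"
    unfolding t_def by (rule Div_conj_pow[OF Delta_balanced Div_complement_left[OF Delta_balanced x]])
  have "inv t \<otimes> (inv (\<Delta>\<^bsup>?n\<^esup>) \<otimes> lprod G xs) = inv (\<Delta>\<^bsup>Suc ?n\<^esup>) \<otimes> (x \<otimes> lprod G xs)"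
    unfolding Delta_pow_Suc_left using xc xsc by (simp add: t_def m_assoc inv_mult_group)
  then show ?case
    using ys t by (intro exI[of _ "inv t # ys"]) auto
qed

lemma wlen_le:
  assumes z: "z \<in> carrier G" and P: "z \<preceq> \<Delta>\<^bsup>P\<^esup>" and Q: "inv z \<preceq> \<Delta>\<^bsup>Q\<^esup>"
  shows "wlen G S z \<le> P + Q"
proof -
  define y where "y = \<Delta>\<^bsup>Q\<^esup> \<otimes> z"
  have yc: "y \<in> carrier G"
    using z by (simp add: y_def)
  have "inv (\<Delta>\<^bsup>Q\<^esup>) \<otimes> y \<otimes> \<Delta>\<^bsup>Q\<^esup> = z \<otimes> \<Delta>\<^bsup>Q\<^esup>"
    using z by (simp add: y_def m_assoc)
  moreover have "z \<otimes> \<Delta>\<^bsup>Q\<^esup> \<in> M"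
    using Q z by (simp add: le_L_iff)
  ultimately have yM: "y \<in> M"
    using Delta_pow_conj_M_iff[OF yc, of Q] by simp
  have "inv y \<otimes> \<Delta>\<^bsup>Q + P\<^esup> = inv z \<otimes> \<Delta>\<^bsup>P\<^esup>"
    using z by (simp add: y_def inv_mult_group m_assoc nat_pow_mult[symmetric])
  then have "y \<preceq> \<Delta>\<^bsup>Q + P\<^esup>"
    using P by (simp add: le_L_iff)
  then obtain xs where xs: "length xs = Q + P" "set xs \<subseteq> Div G M \<Delta>" "lprod G xs = y"
    using M_le_Delta_pow_lprod[OF yM] by blast
  have take: "set (take Q xs) \<subseteq> Div G M \<Delta>" and drop: "set (drop Q xs) \<subseteq> Div G M \<Delta>"
    using xs(2) set_take_subset set_drop_subset by (metis subset_trans)+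
  then have take_drop: "y = lprod G (take Q xs) \<otimes> lprod G (drop Q xs)"
    using lprod_append[of "take Q xs" "drop Q xs"] xs(3) Div_carrier by auto
  obtain ys where ys: "length ys = Q" "set ys \<subseteq> (\<lambda>x. inv x) ` Div G M \<Delta>"
    "lprod G ys = inv (\<Delta>\<^bsup>Q\<^esup>) \<otimes> lprod G (take Q xs)"
    using Delta_pow_inv_mult_lprod[OF take] xs(1) by auto
  have "lprod G (ys @ drop Q xs) = lprod G ys \<otimes> lprod G (drop Q xs)"
    using ys(2) drop Div_carrier by (intro lprod_append) auto
  also have "\<dots> = inv (\<Delta>\<^bsup>Q\<^esup>) \<otimes> y"
  proof -
    have "lprod G (take Q xs) \<in> carrier G" "lprod G (drop Q xs) \<in> carrier G"
      using take drop Div_carrier by (meson lprod_closed subset_iff)+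
    then show ?thesis
      using ys(3) take_drop by (simp add: m_assoc)
  qed
  also have "\<dots> = z"
    using z by (simp add: y_def)
  finally have "lprod G (ys @ drop Q xs) = z" .
  moreover have "set (ys @ drop Q xs) \<subseteq> simple_letters"
    using ys(2) drop by auto
  ultimately show ?thesis
    using wlen_le_length[of "ys @ drop Q xs"] ys(1) xs(1) by simp
qed

lemma wlen_Delta_bounds:
  assumes "z \<in> carrier G"
  shows "\<exists>P Q. P + Q = wlen G S z \<and> z \<preceq> \<Delta>\<^bsup>P\<^esup> \<and> inv z \<preceq> \<Delta>\<^bsup>Q\<^esup>"
proof -
  obtain xs where "length xs = wlen G S z" "set xs \<subseteq> simple_letters" "lprod G xs = z"
    using wlen_attained[OF assms] by blast
  then show ?thesis
    using word_Delta_bounds[of xs] by auto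
qed

lemma wlen_inv:
  assumes z: "z \<in> carrier G"
  shows "wlen G S (inv z) = wlen G S z"
proof -
  have le: "wlen G S (inv x) \<le> wlen G S x" if x: "x \<in> carrier G" for x
  proof -
    obtain P Q where "P + Q = wlen G S x" "x \<preceq> \<Delta>\<^bsup>P\<^esup>" "inv x \<preceq> \<Delta>\<^bsup>Q\<^esup>"
      using wlen_Delta_bounds[OF x] by blast
    then show ?thesis
      using wlen_le[of "inv x" Q P] x by simp
  qed
  show ?thesis
    using le[OF z] le[OF inv_closed[OF z]] z by simp
qed

definition Delta_sup :: "'a \<Rightarrow> nat"
  where "Delta_sup x = (LEAST P. x \<preceq> \<Delta>\<^bsup>P\<^esup>)"

lemma le_Delta_pow_Delta_sup: "x \<in> M \<Longrightarrow> x \<preceq> \<Delta>\<^bsup>Delta_sup x\<^esup>"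
  unfolding Delta_sup_def using M_le_Delta_pow by (rule LeastI_ex)

lemma Delta_sup_le: "x \<preceq> \<Delta>\<^bsup>P\<^esup> \<Longrightarrow> Delta_sup x \<le> P"
  unfolding Delta_sup_def by (rule Least_le)

lemma wlen_le_Delta_sup: "x \<in> M \<Longrightarrow> wlen G S x \<le> Delta_sup x"
  using wlen_le[of x "Delta_sup x" 0] le_Delta_pow_Delta_sup by (auto simp: le_L_iff)

lemma Delta_sup_le_Suc:
  assumes x: "x \<in> M" and y: "y \<in> M" and s: "s \<in> Div G M \<Delta>" and le: "x \<preceq> s \<otimes> y"
  shows "Delta_sup x \<le> Suc (Delta_sup y)"
proof -
  have "s \<otimes> y \<preceq> \<Delta>\<^bsup>Suc (Delta_sup y)\<^esup>"
    using Div_Delta_mult_le[OF s _ le_Delta_pow_Delta_sup[OF y]] y by blast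
  then have "x \<preceq> \<Delta>\<^bsup>Suc (Delta_sup y)\<^esup>"
    using le_L_trans[OF _ _ _ le] x y s Div_carrier by blast
  then show ?thesis
    by (rule Delta_sup_le)
qed

lemma coprime_fraction_le_Delta_pow:
  assumes a: "a \<in> M" and b: "b \<in> M" and cop: "left_coprime a b" and le: "inv a \<otimes> b \<preceq> \<Delta>\<^bsup>P\<^esup>"
  shows "b \<preceq> \<Delta>\<^bsup>P\<^esup>"
proof -
  have "b \<preceq> a \<otimes> \<Delta>\<^bsup>P\<^esup>"
    using le M_carrier[OF a] M_carrier[OF b] by (simp add: le_L_iff inv_mult_group m_assoc)
  then show ?thesis
    by (rule coprime_le_mult_Delta_pow[OF a b cop])
qed

lemma coprime_fraction_inv_le_Delta_pow:
  assumes a: "a \<in> M" and b: "b \<in> M" and cop: "left_coprime a b" and le: "inv (inv a \<otimes> b) \<preceq> \<Delta>\<^bsup>Q\<^esup>"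
  shows "a \<preceq> \<Delta>\<^bsup>Q\<^esup>"
proof -
  have "a \<preceq> b \<otimes> \<Delta>\<^bsup>Q\<^esup>"
    using le M_carrier[OF a] M_carrier[OF b] by (simp add: le_L_iff inv_mult_group m_assoc)
  then show ?thesis
    using coprime_le_mult_Delta_pow[OF b a] cop by (simp add: left_coprime_sym)
qed

end

subsection \<open>Parabolic substructures\<close>

locale parabolic_subgroup = garside_group +
  fixes H N :: "'a set" and \<delta> :: 'a
  assumes parabolic: "parabolic G M \<Delta> H N \<delta>"
begin

lemma delta_balanced: "balanced G M \<delta>"
  using parabolic unfolding parabolic_def by blast

lemma H_eq: "H = generate G (Div G M \<delta>)"
  using parabolic unfolding parabolic_def by blast

lemma N_eq: "N = monoid_gen G (Div G M \<delta>)"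
  using parabolic unfolding parabolic_def by blast

lemma Div_delta_eq: "Div G M \<delta> = Div G M \<Delta> \<inter> N"
  using parabolic unfolding parabolic_def by blast

lemma delta_in_M [simp, intro]: "\<delta> \<in> M"
  using balanced_in_M[OF delta_balanced] .

lemma delta_carrier [simp, intro]: "\<delta> \<in> carrier G"
  using M_carrier by blast

lemma Div_delta_in_N: "s \<in> Div G M \<delta> \<Longrightarrow> s \<in> N"
  using Div_delta_eq by blast

lemma Div_delta_in_Div_Delta: "s \<in> Div G M \<delta> \<Longrightarrow> s \<in> Div G M \<Delta>"
  using Div_delta_eq by blast

lemma N_subset_M: "N \<subseteq> M"
  using Div_delta_eq monoid_gen_Div_Delta unfolding N_eq monoid_gen_def by blast

lemma N_carrier: "n \<in> N \<Longrightarrow> n \<in> carrier G"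
  using N_subset_M M_carrier by blast

lemma N_one [simp, intro]: "\<one> \<in> N"
  unfolding N_eq by (rule monoid_gen_one)

lemma N_mult [intro]: "x \<in> N \<Longrightarrow> y \<in> N \<Longrightarrow> x \<otimes> y \<in> N"
  unfolding N_eq using monoid_gen_mult Div_carrier by blast

lemma N_lprod: "set xs \<subseteq> Div G M \<delta> \<Longrightarrow> lprod G xs \<in> N"
  unfolding N_eq monoid_gen_def by blast

lemma N_obtain_word:
  assumes "n \<in> N"
  obtains xs where "set xs \<subseteq> Div G M \<delta>" "n = lprod G xs"
  using assms unfolding N_eq monoid_gen_def by blast

lemma delta_pow_in_N: "\<delta> [^] (k::nat) \<in> N"
  by (induct k) (auto intro: Div_delta_in_N balanced_self_Div[OF delta_balanced])

lemma N_le_delta_pow: "n \<in> N \<Longrightarrow> \<exists>k. n \<preceq> \<delta> [^] (k::nat)"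
  using monoid_gen_le_pow[OF delta_balanced] N_eq by simp

lemma N_conj_delta_pow: "n \<in> N \<Longrightarrow> \<delta> [^] k \<otimes> n \<otimes> inv (\<delta> [^] (k::nat)) \<in> N"
  using monoid_gen_conj_pow_inv[OF delta_balanced] N_eq by simp

lemma N_subset_H: "N \<subseteq> H"
proof
  fix n assume "n \<in> N"
  then obtain xs where "set xs \<subseteq> Div G M \<delta>" "n = lprod G xs"
    by (rule N_obtain_word)
  then show "n \<in> H"
    unfolding H_eq by (induct xs arbitrary: n) (auto intro: generate.one generate.incl generate.eng)
qed

lemma H_subgroup: "subgroup H G"
  unfolding H_eq using generate_is_subgroup Div_carrier by blast

lemma H_carrier: "x \<in> H \<Longrightarrow> x \<in> carrier G"
  using subgroup.mem_carrier[OF H_subgroup] .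

lemma H_mult: "x \<in> H \<Longrightarrow> y \<in> H \<Longrightarrow> x \<otimes> y \<in> H"
  using subgroup.m_closed[OF H_subgroup] .

lemma H_inv: "x \<in> H \<Longrightarrow> inv x \<in> H"
  using subgroup.m_inv_closed[OF H_subgroup] .

lemma le_N_le_Delta_imp_le_delta:
  assumes n: "n \<in> N" and c: "c \<in> carrier G" "c \<preceq> n" "c \<preceq> \<Delta>"
  shows "c \<preceq> \<delta>"
proof -
  obtain xs where xs: "set xs \<subseteq> Div G M \<delta>" "n = lprod G xs"
    using n by (rule N_obtain_word)
  have "c \<preceq> \<delta>" if "c \<in> carrier G" "c \<preceq> lprod G xs" "c \<preceq> \<Delta>" for c
    using xs(1) that
  proof (induct xs arbitrary: c)
    case Nil
    then show ?case
      using le_L_trans[of c \<one> \<delta>] by simp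
  next
    case (Cons s xs)
    let ?n = "lprod G xs" and ?j = "s \<curlyvee> c"
    have s: "s \<in> Div G M \<delta>" and cc: "c \<in> carrier G"
      using Cons.prems by auto
    have sM: "s \<in> M" and sc: "s \<in> carrier G" and nM: "?n \<in> M"
      using s Cons.prems(1) N_lprod N_subset_M by (auto simp: Div_iff)
    have nc: "?n \<in> carrier G" and jc: "?j \<in> carrier G"
      using nM sc cc by auto
    have "\<Delta> \<preceq> s \<otimes> \<Delta>"
      using Delta_pow_conj_M_iff[OF sc, of 1] sM sc by (simp add: le_L_iff m_assoc)
    then have "c \<preceq> s \<otimes> \<Delta>"
      using le_L_trans[OF cc Delta_carrier] Cons.prems(4) sc by simp
    then have "?j \<preceq> s \<otimes> ?n" "?j \<preceq> s \<otimes> \<Delta>"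
      using join_L_least[OF sc cc] le_L_mult_M[OF sc] nM nc sc Cons.prems(3) by simp_all
    moreover have sj: "s \<otimes> (inv s \<otimes> ?j) = ?j"
      using sc jc by simp
    ultimately have "inv s \<otimes> ?j \<preceq> ?n" "inv s \<otimes> ?j \<preceq> \<Delta>"
      using sc jc nc by (metis le_L_mult_left_iff inv_closed m_closed Delta_carrier)+
    then have "inv s \<otimes> ?j \<preceq> \<delta>"
      using Cons.hyps Cons.prems(1) jc sc by simp
    moreover have "inv s \<otimes> ?j \<in> M"
      using le_join_L1[OF sc cc] by (simp add: le_L_iff)
    ultimately have "inv s \<otimes> ?j \<in> Div G M \<delta>"
      by (simp add: Div_iff)
    then have jN: "?j \<in> N"
      using sj N_mult[OF Div_delta_in_N[OF s] Div_delta_in_N] by metis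
    have "?j \<preceq> \<Delta>"
      using join_L_least[OF sc cc] Div_delta_in_Div_Delta[OF s] Cons.prems(4) by (simp add: Div_iff)
    then have "?j \<in> Div G M \<delta>"
      using jN N_subset_M Div_delta_eq by (auto simp: Div_iff)
    then show ?case
      using le_join_L2[OF sc cc] le_L_trans[OF cc jc delta_carrier] by (simp add: Div_iff)
  qed
  then show ?thesis
    using c xs(2) by simp
qed

lemma Div_delta_quotient:
  assumes t: "t \<in> Div G M \<delta>" and r: "r \<in> M" "t \<preceq> r" "r \<preceq> \<delta>"
  shows "inv t \<otimes> r \<in> Div G M \<delta>"
proof -
  have tc: "t \<in> carrier G" and rc: "r \<in> carrier G"
    using t r Div_carrier by auto
  have "inv t \<otimes> r \<preceq> inv t \<otimes> \<delta>"
    using r tc rc by simp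
  moreover have "inv t \<otimes> \<delta> \<preceq> \<delta>"
    using Div_complement_left[OF delta_balanced t] by (simp add: Div_iff)
  ultimately show ?thesis
    using r tc rc le_L_trans[of "inv t \<otimes> r" "inv t \<otimes> \<delta>" \<delta>] by (simp add: Div_iff le_L_iff)
qed

lemma Div_delta_cancel_left:
  assumes s: "s \<in> Div G M \<delta>" and x: "x \<in> M" and sx: "s \<otimes> x \<in> N"
  shows "x \<in> N"
proof -
  obtain ts where ts: "set ts \<subseteq> Div G M \<delta>" "s \<otimes> x = lprod G ts"
    using sx by (rule N_obtain_word)
  have "x \<in> N" if "s \<in> Div G M \<delta>" "x \<in> M" "s \<otimes> x = lprod G ts" for s x
    using ts(1) that
  proof (induct ts arbitrary: s x)
    case Nil
    then have "inv x = s"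
      using Div_carrier M_carrier inv_equality by simp
    then show ?case
      using M_inv_eq_one Nil.prems Div_iff by auto
  next
    case (Cons t ts)
    let ?n = "lprod G ts" and ?r = "s \<curlyvee> t"
    have s: "s \<in> Div G M \<delta>" and t: "t \<in> Div G M \<delta>"
      using Cons.prems by auto
    have sc: "s \<in> carrier G" and tc: "t \<in> carrier G" and xc: "x \<in> carrier G"
      using s t Cons.prems Div_carrier by auto
    have nM: "?n \<in> M" and nc: "?n \<in> carrier G"
      using Cons.prems(1) N_lprod N_subset_M by auto
    have rc: "?r \<in> carrier G" and sr: "s \<preceq> ?r" and tr: "t \<preceq> ?r"
      using sc tc le_join_L1 le_join_L2 by auto
    have rd: "?r \<preceq> \<delta>"
      using join_L_least[OF sc tc] s t by (simp add: Div_iff)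
    have rM: "?r \<in> M"
      using M_le_L_closed[OF _ rc sr] s by (simp add: Div_iff)
    have "?r \<preceq> t \<otimes> ?n"
      using join_L_least[OF sc tc, of "t \<otimes> ?n"] le_L_mult_M[OF sc Cons.prems(3)] le_L_mult_M[OF tc nM]
        Cons.prems(4) tc nc by simp
    then have "t \<otimes> (inv t \<otimes> ?r) \<preceq> t \<otimes> ?n"
      using tc rc by simp
    then have "inv t \<otimes> ?r \<preceq> ?n"
      using tc rc nc by (simp only: le_L_mult_left_iff inv_closed m_closed)
    then have q: "inv (inv t \<otimes> ?r) \<otimes> ?n \<in> N"
      using Cons.hyps[OF _ Div_delta_quotient[OF t rM tr rd]] Cons.prems(1) rc tc nc
      by (simp add: le_L_iff)
    have "inv s \<otimes> (s \<otimes> x) = inv s \<otimes> (t \<otimes> ?n)"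
      using Cons.prems(4) by simp
    then have "x = (inv s \<otimes> ?r) \<otimes> (inv (inv t \<otimes> ?r) \<otimes> ?n)"
      using sc xc tc rc nc by (simp add: inv_mult_group m_assoc)
    then show ?case
      using N_mult[OF Div_delta_in_N[OF Div_delta_quotient[OF s rM sr rd]] q] by simp
  qed
  then show ?thesis
    using s x ts(2) by blast
qed

lemma N_cancel_left:
  assumes c: "c \<in> N" and x: "x \<in> M" and cx: "c \<otimes> x \<in> N"
  shows "x \<in> N"
proof -
  obtain cs where cs: "set cs \<subseteq> Div G M \<delta>" "c = lprod G cs"
    using c by (rule N_obtain_word)
  have "lprod G cs \<otimes> x \<in> N \<Longrightarrow> x \<in> N"
    using cs(1)
  proof (induct cs)
    case Nil
    then show ?case
      using M_carrier[OF x] by simp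
  next
    case (Cons s cs)
    have sc: "s \<in> carrier G" and csc: "lprod G cs \<in> carrier G" and csM: "lprod G cs \<in> M"
      using Cons.prems(2) N_lprod N_subset_M Div_carrier by auto
    have "s \<otimes> (lprod G cs \<otimes> x) \<in> N"
      using Cons.prems(1) sc csc M_carrier[OF x] by (simp add: m_assoc)
    then show ?case
      using Div_delta_cancel_left[of s "lprod G cs \<otimes> x"] Cons x csM by auto
  qed
  then show ?thesis
    using cx cs(2) by simp
qed

lemma N_prefix_closed:
  assumes a: "a \<in> M" and n: "n \<in> N" and an: "a \<preceq> n"
  shows "a \<in> N"
proof -
  obtain k where "a \<preceq> \<Delta>\<^bsup>k\<^esup>"
    using M_le_Delta_pow[OF a] by blast
  then show ?thesis
    using a n an
  proof (induct k arbitrary: a n)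
    case 0
    then show ?case
      using le_L_one_in_M[of a] by simp
  next
    case (Suc k)
    let ?s = "a \<curlywedge> \<Delta>"
    have ac: "a \<in> carrier G" and nc: "n \<in> carrier G"
      using Suc.prems N_carrier by auto
    have sc: "?s \<in> carrier G" and sa: "?s \<preceq> a"
      using ac meet_L_le1 by auto
    have sn: "?s \<preceq> n"
      using le_L_trans[OF sc ac nc sa Suc.prems(4)] .
    then have "?s \<preceq> \<delta>"
      using le_N_le_Delta_imp_le_delta[OF Suc.prems(3) sc] meet_L_le2[OF ac Delta_carrier] by simp
    then have s: "?s \<in> Div G M \<delta>"
      using head_factor(1)[OF Suc.prems(2,1)] by (simp add: Div_iff)
    have "inv ?s \<otimes> n \<in> N"
      using Div_delta_cancel_left[OF s] sn Suc.prems(3) sc nc by (simp add: le_L_iff)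
    moreover have "inv ?s \<otimes> a \<preceq> inv ?s \<otimes> n"
      using Suc.prems(4) sc ac nc by simp
    ultimately have "inv ?s \<otimes> a \<in> N"
      using Suc.hyps[OF head_factor(3,2)[OF Suc.prems(2,1)]] by simp
    then have "?s \<otimes> (inv ?s \<otimes> a) \<in> N"
      by (rule N_mult[OF Div_delta_in_N[OF s]])
    then show ?case
      using sc ac by simp
  qed
qed

lemma N_join_closed:
  assumes b: "b \<in> N" and c: "c \<in> N"
  shows "b \<curlyvee> c \<in> N"
proof -
  obtain k :: nat where k: "b \<preceq> \<delta> [^] k"
    using N_le_delta_pow[OF b] by (elim exE)
  obtain l :: nat where l: "c \<preceq> \<delta> [^] l"
    using N_le_delta_pow[OF c] by (elim exE)
  have bc: "b \<in> carrier G" and cc: "c \<in> carrier G"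
    using b c N_carrier by auto
  have "b \<preceq> \<delta> [^] (k + l)"
    by (rule le_L_trans[OF bc _ _ k pow_mono_L]) simp_all
  moreover have "c \<preceq> \<delta> [^] (k + l)"
    by (rule le_L_trans[OF cc _ _ l pow_mono_L]) simp_all
  ultimately have "b \<curlyvee> c \<preceq> \<delta> [^] (k + l)"
    by (rule join_L_least[OF bc cc, rotated]) simp
  moreover have "b \<curlyvee> c \<in> M"
    by (rule M_le_L_closed[OF _ _ le_join_L1[OF bc cc]]) (use b N_subset_M bc cc in auto)
  ultimately show ?thesis
    by (rule N_prefix_closed[OF _ delta_pow_in_N, rotated])
qed

lemma H_fraction:
  assumes "x \<in> H"
  shows "\<exists>a\<in>N. \<exists>b\<in>N. x = inv a \<otimes> b"
  using assms unfolding H_eq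
proof (induct rule: generate.induct)
  case one
  have "\<one> = inv \<one> \<otimes> \<one>"
    by simp
  then show ?case
    using N_one by blast
next
  case (incl h)
  then have "h = inv \<one> \<otimes> h"
    using Div_carrier by simp
  then show ?case
    using N_one Div_delta_in_N[OF incl] by blast
next
  case (inv h)
  then have "inv h = inv h \<otimes> \<one>"
    using Div_carrier by simp
  then show ?case
    using N_one Div_delta_in_N[OF inv] by blast
next
  case (eng h1 h2)
  then obtain a1 b1 a2 b2 where ab: "a1 \<in> N" "b1 \<in> N" "h1 = inv a1 \<otimes> b1" "a2 \<in> N" "b2 \<in> N" "h2 = inv a2 \<otimes> b2"
    by blast
  have c: "a1 \<in> carrier G" "b1 \<in> carrier G" "a2 \<in> carrier G" "b2 \<in> carrier G"
    using ab N_carrier by auto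
  obtain k :: nat where k: "a2 \<preceq> \<delta> [^] k"
    using N_le_delta_pow ab(4) by blast
  define e where "e = inv a2 \<otimes> \<delta> [^] k"
  have "e \<in> N"
    using N_cancel_left[OF ab(4)] k c delta_pow_in_N by (simp add: e_def le_L_iff)
  then have "\<delta> [^] k \<otimes> (b1 \<otimes> e) \<otimes> inv (\<delta> [^] k) \<otimes> b2 \<in> N"
    using N_mult[OF N_conj_delta_pow[OF N_mult[OF ab(2)]] ab(5)] by simp
  moreover have "\<delta> [^] k \<otimes> a1 \<in> N"
    using N_mult[OF delta_pow_in_N ab(1)] .
  moreover have "h1 \<otimes> h2 = inv (\<delta> [^] k \<otimes> a1) \<otimes> (\<delta> [^] k \<otimes> (b1 \<otimes> e) \<otimes> inv (\<delta> [^] k) \<otimes> b2)"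
    using ab c by (simp add: e_def m_assoc inv_mult_group)
  ultimately show ?case
    by blast
qed

subsection \<open>\<open>N\<close>-reduced elements\<close>

text \<open>The condition \<open>\<theta> \<curlywedge> \<delta> = 1\<close> of \<open>N_reduced\<close>, phrased without the meet.\<close>

definition N_red :: "'a \<Rightarrow> bool"
  where "N_red \<theta> \<longleftrightarrow> \<theta> \<in> M \<and> left_coprime \<theta> \<delta>"

lemma N_red_coprime_N:
  assumes \<theta>: "N_red \<theta>" and n: "n \<in> N"
  shows "left_coprime \<theta> n"
proof -
  have \<theta>M: "\<theta> \<in> M" and \<theta>c: "\<theta> \<in> carrier G" and nM: "n \<in> M" and nc: "n \<in> carrier G"
    using \<theta> n N_subset_M N_carrier by (auto simp: N_red_def)
  let ?g = "\<theta> \<curlywedge> n"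
  have gc: "?g \<in> carrier G"
    using \<theta>c nc by simp
  have "left_coprime ?g \<Delta>"
    unfolding left_coprime_def
  proof (intro ballI impI)
    fix e assume e: "e \<in> carrier G" "e \<preceq> ?g" "e \<preceq> \<Delta>"
    have "e \<preceq> \<delta>"
      using le_N_le_Delta_imp_le_delta[OF n e(1) le_L_trans[OF e(1) gc nc e(2) meet_L_le2[OF \<theta>c nc]] e(3)] .
    moreover have "e \<preceq> \<theta>"
      using le_L_trans[OF e(1) gc \<theta>c e(2) meet_L_le1[OF \<theta>c nc]] .
    ultimately show "e \<preceq> \<one>"
      using \<theta> e(1) by (simp add: N_red_def left_coprime_def)
  qed
  then have "?g = \<one>"
    using M_coprime_Delta_eq_one meet_L_in_M[OF \<theta>M nM] by blast
  then show ?thesis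
    using left_coprime_of_meet_one[OF \<theta>c nc] by simp
qed

lemma N_red_meet_le:
  assumes \<theta>: "N_red \<theta>" and a: "a \<in> N" and b: "b \<in> N"
  shows "a \<curlywedge> (b \<otimes> \<theta>) \<preceq> b"
proof -
  have \<theta>M: "\<theta> \<in> M" and \<theta>c: "\<theta> \<in> carrier G"
    using \<theta> by (auto simp: N_red_def)
  have ac: "a \<in> carrier G" and bc: "b \<in> carrier G" and bM: "b \<in> M"
    using a b N_carrier N_subset_M by auto
  let ?g = "a \<curlywedge> (b \<otimes> \<theta>)"
  let ?j = "b \<curlyvee> ?g"
  have gc: "?g \<in> carrier G"
    using ac bc \<theta>c by simp
  have "?g \<in> M"
    using meet_L_in_M[OF _ M_mult[OF bM \<theta>M]] a N_subset_M by blast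
  then have "?g \<in> N"
    using N_prefix_closed[OF _ a meet_L_le1[OF ac]] bc \<theta>c by simp
  then have jN: "?j \<in> N"
    using N_join_closed[OF b] by simp
  have jc: "?j \<in> carrier G"
    using bc gc by simp
  have "?j \<preceq> b \<otimes> \<theta>"
    using join_L_least[OF bc gc] le_L_mult_M[OF bc \<theta>M] meet_L_le2[OF ac] bc \<theta>c by simp
  then have w\<theta>: "inv b \<otimes> ?j \<preceq> \<theta>"
    using bc jc \<theta>c by (simp add: le_L_iff inv_mult_group m_assoc)
  have wM: "inv b \<otimes> ?j \<in> M"
    using le_join_L1[OF bc gc] by (simp add: le_L_iff)
  then have "inv b \<otimes> ?j \<in> N"
    using N_cancel_left[OF b] jN bc jc by simp
  then have "inv b \<otimes> ?j \<preceq> \<one>"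
    using N_red_coprime_N[OF \<theta>] w\<theta> bc jc unfolding left_coprime_def by simp
  then have "inv b \<otimes> ?j = \<one>"
    using le_L_one_in_M[OF wM] by simp
  then have "b \<otimes> (inv b \<otimes> ?j) = b"
    using bc by simp
  then have "?j = b"
    using bc jc by simp
  then show ?thesis
    using le_join_L2[OF bc gc] by simp
qed

lemma H_coprime_fraction:
  assumes \<theta>: "N_red \<theta>" and x: "x \<in> H"
  shows "\<exists>a\<in>N. \<exists>b\<in>N. x = inv a \<otimes> b \<and> left_coprime a (b \<otimes> \<theta>)"
proof -
  obtain a0 b0 where ab: "a0 \<in> N" "b0 \<in> N" "x = inv a0 \<otimes> b0"
    using H_fraction[OF x] by blast
  have \<theta>M: "\<theta> \<in> M" and \<theta>c: "\<theta> \<in> carrier G"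
    using \<theta> by (auto simp: N_red_def)
  have c: "a0 \<in> carrier G" "b0 \<in> carrier G"
    using ab N_carrier by auto
  let ?g = "a0 \<curlywedge> (b0 \<otimes> \<theta>)"
  have gc: "?g \<in> carrier G"
    using c \<theta>c by simp
  have "?g \<in> M"
    using meet_L_in_M[OF _ M_mult[OF _ \<theta>M]] ab N_subset_M by blast
  then have gN: "?g \<in> N"
    using N_prefix_closed[OF _ ab(1) meet_L_le1[OF c(1)]] c \<theta>c by simp
  have "inv ?g \<otimes> a0 \<in> M" "inv ?g \<otimes> b0 \<in> M"
    using meet_L_le1[of a0 "b0 \<otimes> \<theta>"] N_red_meet_le[OF \<theta> ab(1,2)] c \<theta>c by (simp_all add: le_L_iff)
  then have "inv ?g \<otimes> a0 \<in> N" "inv ?g \<otimes> b0 \<in> N"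
    using N_cancel_left[OF gN] ab(1,2) gc c by simp_all
  moreover have "x = inv (inv ?g \<otimes> a0) \<otimes> (inv ?g \<otimes> b0)"
    using ab(3) gc c by (simp add: inv_mult_group m_assoc)
  moreover have "left_coprime (inv ?g \<otimes> a0) ((inv ?g \<otimes> b0) \<otimes> \<theta>)"
    using left_coprime_meet_quotients[of a0 "b0 \<otimes> \<theta>"] c \<theta>c gc by (simp add: m_assoc)
  ultimately show ?thesis
    by blast
qed

lemma N_red_H_mult_le_Delta_pow:
  assumes \<theta>: "N_red \<theta>" and x: "x \<in> H" and le: "x \<otimes> \<theta> \<preceq> \<Delta>\<^bsup>P\<^esup>"
  shows "\<theta> \<preceq> \<Delta>\<^bsup>P\<^esup>"
proof -
  obtain a b where ab: "a \<in> N" "b \<in> N" "x = inv a \<otimes> b" and cop: "left_coprime a (b \<otimes> \<theta>)"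
    using H_coprime_fraction[OF \<theta> x] by blast
  have \<theta>M: "\<theta> \<in> M" and aM: "a \<in> M" and bM: "b \<in> M"
    using \<theta> ab N_subset_M by (auto simp: N_red_def)
  have "inv a \<otimes> (b \<otimes> \<theta>) \<preceq> \<Delta>\<^bsup>P\<^esup>"
    using le ab(3) M_carrier[OF aM] M_carrier[OF bM] M_carrier[OF \<theta>M] by (simp add: m_assoc)
  then have "b \<otimes> \<theta> \<preceq> \<Delta>\<^bsup>P\<^esup>"
    using coprime_fraction_le_Delta_pow[OF aM _ cop] bM \<theta>M by blast
  then show ?thesis
    using le_Delta_pow_right_factor[OF bM] M_carrier[OF \<theta>M] by blast
qed

lemma N_red_Delta_sup_le_wlen:
  assumes \<theta>: "N_red \<theta>" and x: "x \<in> H"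
  shows "Delta_sup \<theta> \<le> wlen G S (x \<otimes> \<theta>)"
proof -
  have "x \<otimes> \<theta> \<in> carrier G"
    using \<theta> H_carrier[OF x] M_carrier by (simp add: N_red_def)
  then obtain P Q where PQ: "P + Q = wlen G S (x \<otimes> \<theta>)" "x \<otimes> \<theta> \<preceq> \<Delta>\<^bsup>P\<^esup>"
    using wlen_Delta_bounds by blast
  have "Delta_sup \<theta> \<le> P"
    by (rule Delta_sup_le[OF N_red_H_mult_le_Delta_pow[OF \<theta> x PQ(2)]])
  then show ?thesis
    using PQ(1) by simp
qed

lemma N_red_proj:
  assumes \<theta>: "N_red \<theta>" and \<gamma>: "\<gamma> \<in> proj G S H \<theta>"
  shows "inv \<gamma> \<in> N" "inv \<gamma> \<otimes> \<theta> \<preceq> \<Delta>\<^bsup>Delta_sup \<theta>\<^esup>"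
proof -
  let ?m = "Delta_sup \<theta>"
  have \<theta>M: "\<theta> \<in> M" and \<theta>c: "\<theta> \<in> carrier G"
    using \<theta> by (auto simp: N_red_def)
  have \<gamma>H: "\<gamma> \<in> H" and \<gamma>min: "\<forall>k\<in>H. gdist G S \<theta> \<gamma> \<le> gdist G S \<theta> k"
    using \<gamma> unfolding mem_proj_iff by blast+
  have \<gamma>c: "\<gamma> \<in> carrier G"
    using H_carrier[OF \<gamma>H] .
  have "wlen G S (inv \<gamma> \<otimes> \<theta>) = gdist G S \<theta> \<gamma>"
    using wlen_inv[of "inv \<theta> \<otimes> \<gamma>"] \<theta>c \<gamma>c by (simp add: gdist_def inv_mult_group)
  also have "\<dots> \<le> gdist G S \<theta> \<one>"
    using \<gamma>min subgroup.one_closed[OF H_subgroup] by blast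
  also have "\<dots> \<le> ?m"
    using wlen_inv[OF \<theta>c] wlen_le_Delta_sup[OF \<theta>M] \<theta>c by (simp add: gdist_def)
  finally have wlen_le_m: "wlen G S (inv \<gamma> \<otimes> \<theta>) \<le> ?m" .
  obtain P Q where PQ: "P + Q = wlen G S (inv \<gamma> \<otimes> \<theta>)" "inv \<gamma> \<otimes> \<theta> \<preceq> \<Delta>\<^bsup>P\<^esup>" "inv (inv \<gamma> \<otimes> \<theta>) \<preceq> \<Delta>\<^bsup>Q\<^esup>"
    using wlen_Delta_bounds[OF m_closed[OF inv_closed[OF \<gamma>c] \<theta>c]] by blast
  obtain a b where ab: "a \<in> N" "b \<in> N" "inv \<gamma> = inv a \<otimes> b" and cop: "left_coprime a (b \<otimes> \<theta>)"
    using H_coprime_fraction[OF \<theta> H_inv[OF \<gamma>H]] by blast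
  have aM: "a \<in> M" and bM: "b \<in> M" and ac: "a \<in> carrier G" and bc: "b \<in> carrier G"
    using ab N_subset_M M_carrier by auto
  have frac: "inv \<gamma> \<otimes> \<theta> = inv a \<otimes> (b \<otimes> \<theta>)"
    using ab(3) ac bc \<theta>c by (simp add: m_assoc)
  have b\<theta>: "b \<otimes> \<theta> \<preceq> \<Delta>\<^bsup>P\<^esup>"
    using coprime_fraction_le_Delta_pow[OF aM M_mult[OF bM \<theta>M] cop] PQ(2) frac by simp
  have "?m \<le> P"
    by (rule Delta_sup_le[OF le_Delta_pow_right_factor[OF bM \<theta>c b\<theta>]])
  then have "Q = 0" and "P = ?m"
    using PQ(1) wlen_le_m by auto
  moreover have "a \<preceq> \<Delta>\<^bsup>Q\<^esup>"
    using coprime_fraction_inv_le_Delta_pow[OF aM M_mult[OF bM \<theta>M] cop] PQ(3) frac by simp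
  ultimately have "a \<preceq> \<one>"
    by simp
  then have "inv \<gamma> = b"
    using le_L_one_in_M[OF aM] ab(3) bc by simp
  then show "inv \<gamma> \<in> N" "inv \<gamma> \<otimes> \<theta> \<preceq> \<Delta>\<^bsup>?m\<^esup>"
    using ab(2) b\<theta> \<open>P = ?m\<close> by simp_all
qed

lemma N_red_le_gdist:
  assumes \<theta>: "N_red \<theta>" and y: "y \<in> H" and k: "k \<in> H"
  shows "Delta_sup \<theta> \<le> gdist G S (y \<otimes> \<theta>) k"
proof -
  have \<theta>c: "\<theta> \<in> carrier G" and yc: "y \<in> carrier G" and kc: "k \<in> carrier G"
    using \<theta> H_carrier[OF y] H_carrier[OF k] M_carrier by (auto simp: N_red_def)
  have "gdist G S (y \<otimes> \<theta>) k = wlen G S ((inv k \<otimes> y) \<otimes> \<theta>)"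
    using wlen_inv[of "inv (y \<otimes> \<theta>) \<otimes> k"] \<theta>c yc kc by (simp add: gdist_def inv_mult_group m_assoc)
  then show ?thesis
    using N_red_Delta_sup_le_wlen[OF \<theta> H_mult[OF H_inv[OF k] y]] by simp
qed

lemma N_red_mult_simple_le_delta:
  assumes \<theta>: "N_red \<theta>" and u: "u \<in> Div G M \<Delta>" and x: "x \<in> N" "x \<preceq> \<theta> \<otimes> u"
  shows "x \<preceq> \<delta>"
proof -
  have \<theta>M: "\<theta> \<in> M" and \<theta>c: "\<theta> \<in> carrier G" and uc: "u \<in> carrier G" and xM: "x \<in> M" and xc: "x \<in> carrier G"
    using \<theta> u x N_subset_M Div_carrier by (auto simp: N_red_def)
  have "\<theta> \<otimes> u \<preceq> \<theta> \<otimes> \<Delta>\<^bsup>1\<^esup>"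
    using u \<theta>c uc by (simp add: Div_iff)
  then have "x \<preceq> \<theta> \<otimes> \<Delta>\<^bsup>1\<^esup>"
    using le_L_trans[OF xc _ _ x(2)] \<theta>c uc by simp
  then have "x \<preceq> \<Delta>\<^bsup>1\<^esup>"
    by (rule coprime_le_mult_Delta_pow[OF \<theta>M xM N_red_coprime_N[OF \<theta> x(1)]])
  then have "x \<in> Div G M \<delta>"
    using Div_delta_eq xM x(1) by (simp add: Div_iff)
  then show ?thesis
    by (simp add: Div_iff)
qed

lemma N_red_mult_simple:
  assumes \<theta>: "N_red \<theta>" and u: "u \<in> Div G M \<Delta>"
  obtains n \<theta>' where "n \<in> Div G M \<delta>" "\<theta> \<otimes> u = n \<otimes> \<theta>'" "N_red \<theta>'"
proof -
  let ?t = "\<theta> \<otimes> u"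
  let ?n = "?t \<curlywedge> \<delta>"
  have tM: "?t \<in> M" and tc: "?t \<in> carrier G"
    using \<theta> u by (auto simp: N_red_def Div_iff)
  have nc: "?n \<in> carrier G" and nt: "?n \<preceq> ?t"
    using tc meet_L_le1 by auto
  have n: "?n \<in> Div G M \<delta>"
    using meet_L_in_M[OF tM delta_in_M] meet_L_le2[OF tc delta_carrier] by (simp add: Div_iff)
  define \<theta>' where "\<theta>' = inv ?n \<otimes> ?t"
  have \<theta>'M: "\<theta>' \<in> M" and \<theta>'c: "\<theta>' \<in> carrier G"
    using nt nc tc by (auto simp: \<theta>'_def le_L_iff)
  have t_eq: "?t = ?n \<otimes> \<theta>'"
    using nc tc by (simp add: \<theta>'_def)
  have "left_coprime \<theta>' \<delta>"
    unfolding left_coprime_def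
  proof (intro ballI impI)
    fix c assume c: "c \<in> carrier G" "c \<preceq> \<theta>'" "c \<preceq> \<delta>"
    let ?e = "\<theta>' \<curlywedge> \<delta>"
    have ec: "?e \<in> carrier G"
      using \<theta>'c by simp
    have "?e \<in> Div G M \<delta>"
      using meet_L_in_M[OF \<theta>'M delta_in_M] meet_L_le2[OF \<theta>'c delta_carrier] by (simp add: Div_iff)
    then have neN: "?n \<otimes> ?e \<in> N"
      using N_mult Div_delta_in_N n by blast
    have "?n \<otimes> ?e \<preceq> ?n \<otimes> \<theta>'"
      using meet_L_le1[OF \<theta>'c delta_carrier] nc ec \<theta>'c by simp
    then have "?n \<otimes> ?e \<preceq> ?t"
      by (simp only: t_eq[symmetric])
    then have "?n \<otimes> ?e \<preceq> ?n"
      using meet_L_greatest[OF tc delta_carrier] N_red_mult_simple_le_delta[OF \<theta> u neN] nc ec by simp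
    then have "?e \<preceq> \<one>"
      using le_L_mult_left_iff[OF nc ec one_closed] nc by simp
    then show "c \<preceq> \<one>"
      using le_L_trans[OF c(1) ec one_closed] meet_L_greatest[OF \<theta>'c delta_carrier c(1)] c by simp
  qed
  then show ?thesis
    using that[OF n t_eq] \<theta>'M by (simp add: N_red_def)
qed

lemma inv_in_N_if_between:
  assumes B: "B \<in> N" and J: "J \<in> carrier G" "inv B \<preceq> J" "J \<preceq> \<one>"
  shows "inv J \<in> N"
proof -
  have Bc: "B \<in> carrier G"
    using N_carrier[OF B] .
  have JM: "inv J \<in> M" and BJM: "B \<otimes> J \<in> M"
    using J Bc by (simp_all add: le_L_iff)
  have "B \<otimes> J \<preceq> B"
    using JM Bc J(1) by (simp add: le_L_iff inv_mult_group m_assoc)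
  then have "B \<otimes> J \<in> N"
    by (rule N_prefix_closed[OF BJM B])
  moreover have "(B \<otimes> J) \<otimes> inv J = B"
    using Bc J(1) by (simp add: m_assoc)
  ultimately show ?thesis
    using N_cancel_left[OF _ JM] B by metis
qed

text \<open>The correction \<open>J\<close> is the join of \<open>B\<^bsup>-1\<^esup>\<close> and \<open>\<theta>' \<Delta>\<^bsup>-m\<^esup>\<close>: both lie below \<open>1\<close> and
  below \<open>B\<^bsup>-1\<^esup> \<Delta>\<^bsup>2\<^esup>\<close>.\<close>

lemma join_correction:
  assumes B: "B \<in> N" and \<theta>': "\<theta>' \<in> M" "\<theta>' \<preceq> \<Delta>\<^bsup>m\<^esup>" and le: "B \<otimes> \<theta>' \<preceq> \<Delta>\<^bsup>2 + m\<^esup>"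
  shows "\<exists>J\<in>carrier G. inv J \<in> N \<and> wlen G S (B \<otimes> J) \<le> 2 \<and> wlen G S (inv \<theta>' \<otimes> J) \<le> m"
proof -
  have BM: "B \<in> M" and Bc: "B \<in> carrier G" and \<theta>'c: "\<theta>' \<in> carrier G"
    using B \<theta>' N_subset_M by auto
  define \<xi> where "\<xi> = \<Delta>\<^bsup>m\<^esup> \<otimes> inv \<theta>'"
  have xic: "\<xi> \<in> carrier G"
    using \<theta>'c by (simp add: \<xi>_def)
  have xi_conj: "inv (\<Delta>\<^bsup>m\<^esup>) \<otimes> (\<xi> \<otimes> y) \<otimes> \<Delta>\<^bsup>m\<^esup> = inv \<theta>' \<otimes> y \<otimes> \<Delta>\<^bsup>m\<^esup>" if "y \<in> carrier G" for y
    using that \<theta>'c by (simp add: \<xi>_def m_assoc)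
  have xiM: "\<xi> \<in> M"
    using xi_conj[of \<one>] Delta_pow_conj_M_iff[of \<xi> m] \<theta>'(2) xic \<theta>'c by (simp add: le_L_iff)
  define J where "J = inv B \<curlyvee> inv \<xi>"
  have Jc: "J \<in> carrier G"
    using Bc xic by (simp add: J_def)
  have BJ: "inv B \<preceq> J" and xiJ: "inv \<xi> \<preceq> J"
    using Bc xic le_join_L1 le_join_L2 by (simp_all add: J_def)
  have "J \<preceq> \<one>"
    using join_L_least[of "inv B" "inv \<xi>" \<one>] Bc xic BM xiM by (simp add: J_def le_L_iff)
  then have JM: "inv J \<in> M" and JN: "inv J \<in> N"
    using inv_in_N_if_between[OF B Jc BJ] Jc by (simp_all add: le_L_iff)
  have cM: "B \<otimes> J \<in> M"
    using BJ Bc by (simp add: le_L_iff)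
  have "inv \<xi> \<preceq> inv B \<otimes> \<Delta>\<^bsup>2\<^esup>"
  proof -
    have "inv (\<Delta>\<^bsup>m\<^esup>) \<otimes> (\<xi> \<otimes> (inv B \<otimes> \<Delta>\<^bsup>2\<^esup>)) \<otimes> \<Delta>\<^bsup>m\<^esup> = inv (B \<otimes> \<theta>') \<otimes> \<Delta>\<^bsup>2 + m\<^esup>"
      using xi_conj Bc \<theta>'c by (simp add: inv_mult_group m_assoc nat_pow_mult)
    then show ?thesis
      using le Delta_pow_conj_M_iff[of "\<xi> \<otimes> (inv B \<otimes> \<Delta>\<^bsup>2\<^esup>)" m] xic Bc by (simp add: le_L_iff)
  qed
  moreover have "inv B \<preceq> inv B \<otimes> \<Delta>\<^bsup>2\<^esup>"
    using le_L_mult_M Bc by simp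
  ultimately have "J \<preceq> inv B \<otimes> \<Delta>\<^bsup>2\<^esup>"
    using join_L_least Bc xic by (simp add: J_def)
  then have "B \<otimes> J \<preceq> \<Delta>\<^bsup>2\<^esup>"
    using le_L_mult_left_iff[OF Bc Jc, of "inv B \<otimes> \<Delta>\<^bsup>2\<^esup>"] Bc by simp
  then have "wlen G S (B \<otimes> J) \<le> 2 + 0"
    using wlen_le[of "B \<otimes> J" 2 0] cM Bc Jc by (simp add: le_L_iff)
  moreover have "wlen G S (inv \<theta>' \<otimes> J) \<le> 0 + m"
  proof (rule wlen_le)
    show "inv \<theta>' \<otimes> J \<preceq> \<Delta>\<^bsup>0\<^esup>"
      using JM \<theta>'(1) \<theta>'c Jc by (simp add: le_L_iff inv_mult_group)
    show "inv (inv \<theta>' \<otimes> J) \<preceq> \<Delta>\<^bsup>m\<^esup>"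
      using xiJ xi_conj[OF Jc] Delta_pow_conj_M_iff[of "\<xi> \<otimes> J" m] xic Jc \<theta>'c by (simp add: le_L_iff m_assoc)
  qed (use \<theta>'c Jc in simp)
  ultimately show ?thesis
    using JN Jc by auto
qed

lemma N_red_mult_in_proj:
  assumes \<theta>: "N_red \<theta>" and n: "n \<in> H" and J: "J \<in> H" and le: "wlen G S (inv \<theta> \<otimes> J) \<le> Delta_sup \<theta>"
  shows "n \<otimes> J \<in> proj G S H (n \<otimes> \<theta>)"
proof -
  have "gdist G S (n \<otimes> \<theta>) (n \<otimes> J) = wlen G S (inv \<theta> \<otimes> J)"
    using gdist_mult_left H_carrier[OF n] H_carrier[OF J] \<theta> M_carrier by (simp add: N_red_def gdist_def)
  then have "gdist G S (n \<otimes> \<theta>) (n \<otimes> J) \<le> gdist G S (n \<otimes> \<theta>) k" if "k \<in> H" for k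
    using le N_red_le_gdist[OF \<theta> n that] by simp
  then show ?thesis
    unfolding mem_proj_iff using H_mult[OF n J] by blast
qed

theorem N_red_proj_mult_simple:
  assumes \<theta>: "N_red \<theta>" and \<gamma>: "\<gamma> \<in> proj G S H \<theta>" and u: "u \<in> Div G M \<Delta>"
  shows "\<exists>\<gamma>'\<in>proj G S H (\<theta> \<otimes> u). gdist G S \<gamma> \<gamma>' \<le> 2"
proof -
  let ?m = "Delta_sup \<theta>"
  have b: "inv \<gamma> \<in> N" and b\<theta>: "inv \<gamma> \<otimes> \<theta> \<preceq> \<Delta>\<^bsup>?m\<^esup>"
    by (rule N_red_proj[OF \<theta> \<gamma>])+
  obtain n \<theta>' where n: "n \<in> Div G M \<delta>" and tu: "\<theta> \<otimes> u = n \<otimes> \<theta>'" and \<theta>': "N_red \<theta>'"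
    using N_red_mult_simple[OF \<theta> u] by blast
  let ?m' = "Delta_sup \<theta>'"
  have \<theta>M: "\<theta> \<in> M" and \<theta>'M: "\<theta>' \<in> M" and uM: "u \<in> M" and \<gamma>c: "\<gamma> \<in> carrier G"
    using \<theta> \<theta>' u \<gamma> H_carrier by (auto simp: N_red_def Div_iff mem_proj_iff)
  have c: "\<theta> \<in> carrier G" "\<theta>' \<in> carrier G" "u \<in> carrier G" "n \<in> carrier G"
    using \<theta>M \<theta>'M uM n Div_carrier by auto
  have "\<theta> \<preceq> n \<otimes> \<theta>'"
    using le_L_mult_M[OF c(1) uM] tu by simp
  then have "Suc ?m \<le> 2 + ?m'"
    using Delta_sup_le_Suc[OF \<theta>M \<theta>'M Div_delta_in_Div_Delta[OF n]] by simp
  then have "\<Delta>\<^bsup>Suc ?m\<^esup> \<preceq> \<Delta>\<^bsup>2 + ?m'\<^esup>"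
    by (rule pow_mono_L[OF Delta_in_M])
  moreover have "inv \<gamma> \<otimes> \<theta> \<otimes> u \<preceq> \<Delta>\<^bsup>Suc ?m\<^esup>"
    using mult_Div_Delta_le[OF u _ b\<theta>] c \<gamma>c by simp
  ultimately have "inv \<gamma> \<otimes> \<theta> \<otimes> u \<preceq> \<Delta>\<^bsup>2 + ?m'\<^esup>"
    using le_L_trans c \<gamma>c by (meson inv_closed m_closed nat_pow_closed Delta_carrier)
  moreover have "inv \<gamma> \<otimes> \<theta> \<otimes> u = (inv \<gamma> \<otimes> n) \<otimes> \<theta>'"
    using tu c \<gamma>c by (simp add: m_assoc)
  ultimately have "(inv \<gamma> \<otimes> n) \<otimes> \<theta>' \<preceq> \<Delta>\<^bsup>2 + ?m'\<^esup>"
    by (simp only:)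
  then obtain J where Jc: "J \<in> carrier G" and J: "inv J \<in> N" "wlen G S ((inv \<gamma> \<otimes> n) \<otimes> J) \<le> 2"
    "wlen G S (inv \<theta>' \<otimes> J) \<le> ?m'"
    using join_correction[OF N_mult[OF b Div_delta_in_N[OF n]] \<theta>'M le_Delta_pow_Delta_sup[OF \<theta>'M]] by blast
  have "inv (inv J) \<in> H"
    using H_inv N_subset_H J(1) by blast
  then have "n \<otimes> J \<in> proj G S H (\<theta> \<otimes> u)"
    using N_red_mult_in_proj[OF \<theta>' _ _ J(3)] N_subset_H Div_delta_in_N[OF n] tu Jc by auto
  moreover have "gdist G S \<gamma> (n \<otimes> J) \<le> 2"
    using J(2) c \<gamma>c Jc by (simp add: gdist_def m_assoc)
  ultimately show ?thesis
    by blast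
qed

lemma HN_reduced_in_M_imp_N_red:
  assumes \<theta>: "HN_reduced G M \<Delta> \<delta> \<theta>" and \<theta>M: "\<theta> \<in> M"
  shows "N_red \<theta>"
proof -
  obtain a and p :: int where a: "unmovable G M \<Delta> a" "N_reduced G M \<delta> a" and \<theta>_eq: "\<theta> = a \<otimes> \<Delta> [^] p"
    and p: "p = 0 \<or> p < 0"
    using \<theta> unfolding HN_reduced_def by blast
  have aM: "a \<in> M" and ac: "a \<in> carrier G" and \<theta>c: "\<theta> \<in> carrier G"
    using a \<theta>M by (auto simp: unmovable_def)
  have "p = 0"
  proof (rule ccontr)
    assume "p \<noteq> 0"
    define k where "k = nat (- p)"
    have k: "p = - int k" "1 \<le> k"
      using p \<open>p \<noteq> 0\<close> by (simp_all add: k_def)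
    have "\<theta> = a \<otimes> inv (\<Delta>\<^bsup>k\<^esup>)"
      using \<theta>_eq k(1) int_pow_neg_int[OF Delta_carrier] by simp
    then have "a = \<Delta>\<^bsup>k\<^esup> \<otimes> (inv (\<Delta>\<^bsup>k\<^esup>) \<otimes> \<theta> \<otimes> \<Delta>\<^bsup>k\<^esup>)"
      using ac by (simp add: m_assoc)
    then have "\<Delta>\<^bsup>k\<^esup> \<preceq> a"
      using le_L_mult_M Delta_pow_conj_M_iff[OF \<theta>c] \<theta>M by simp
    moreover have "\<Delta>\<^bsup>1\<^esup> \<preceq> \<Delta>\<^bsup>k\<^esup>"
      using pow_mono_L[OF Delta_in_M k(2)] .
    ultimately have "\<Delta> \<preceq> a"
      using le_L_trans[OF Delta_carrier nat_pow_closed[OF Delta_carrier, of k] ac] by simp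
    then show False
      using a(1) by (simp add: unmovable_def)
  qed
  then have "\<theta> = a"
    using \<theta>_eq ac by simp
  moreover have "a \<curlywedge> \<delta> = \<one>"
    using a(2) by (simp add: N_reduced_def)
  ultimately show ?thesis
    using left_coprime_of_meet_one[OF ac delta_carrier] \<theta>M by (simp add: N_red_def)
qed

theorem N_red_coset_proj_mult_simple:
  assumes \<theta>: "N_red \<theta>" and h: "h \<in> H" and \<beta>: "\<beta> \<in> proj G S H (h \<otimes> \<theta>)" and u: "u \<in> Div G M \<Delta>"
  shows "\<exists>\<beta>'\<in>proj G S H (h \<otimes> \<theta> \<otimes> u). gdist G S \<beta> \<beta>' \<le> 2"
proof -
  have hc: "h \<in> carrier G" and \<theta>c: "\<theta> \<in> carrier G" and uc: "u \<in> carrier G" and \<beta>c: "\<beta> \<in> carrier G"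
    using H_carrier[OF h] \<theta> u Div_carrier \<beta> H_carrier unfolding mem_proj_iff by (auto simp: N_red_def)
  have "inv h \<otimes> \<beta> \<in> proj G S H \<theta>"
    using proj_mult_left[OF H_subgroup H_inv[OF h] _ \<beta>] hc \<theta>c by (simp add: m_assoc[symmetric])
  then obtain \<gamma>' where \<gamma>': "\<gamma>' \<in> proj G S H (\<theta> \<otimes> u)" "gdist G S (inv h \<otimes> \<beta>) \<gamma>' \<le> 2"
    using N_red_proj_mult_simple[OF \<theta> _ u] by blast
  have "h \<otimes> \<gamma>' \<in> proj G S H (h \<otimes> \<theta> \<otimes> u)"
    using proj_mult_left[OF H_subgroup h m_closed[OF \<theta>c uc] \<gamma>'(1)] hc \<theta>c uc by (simp add: m_assoc)
  moreover have "gdist G S \<beta> (h \<otimes> \<gamma>') = gdist G S (inv h \<otimes> \<beta>) \<gamma>'"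
    using gdist_mult_left[OF hc, of "inv h \<otimes> \<beta>" \<gamma>'] hc \<beta>c H_carrier \<gamma>'(1) unfolding mem_proj_iff by simp
  ultimately show ?thesis
    using \<gamma>'(2) by (intro bexI[of _ "h \<otimes> \<gamma>'"]) simp_all
qed

end

lemma parabolic_subgroupI:
  "garside G M \<Delta> \<Longrightarrow> parabolic G M \<Delta> H N \<delta> \<Longrightarrow> parabolic_subgroup G M \<Delta> H N \<delta>"
  unfolding parabolic_subgroup_def parabolic_subgroup_axioms_def garside_group_def garside_group_axioms_def
    garside_def by blast

theorem lemma5p9:
  fixes G (structure)
  assumes "garside G M \<Delta>"
    and "parabolic G M \<Delta> H N \<delta>"
    and "S = Div G M \<Delta> - {\<one>}"
    and "T = HN_reduced_set G M \<Delta> \<delta>"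
    and "\<alpha> \<in> carrier G"
    and "\<beta> \<in> proj G S H \<alpha>"
    and "u \<in> S"
    and "\<theta> \<in> T"
    and "H #> \<theta> = H #> \<alpha>"
    and "\<theta> \<in> M"
  shows "\<exists>\<beta>' \<in> proj G S H (\<alpha> \<otimes> u). gdist G S \<beta> \<beta>' \<le> 3"
proof -
  interpret parabolic_subgroup G M \<Delta> H N \<delta>
    using parabolic_subgroupI assms(1,2) .
  have \<theta>: "N_red \<theta>"
    using HN_reduced_in_M_imp_N_red assms(4,8,10) by (simp add: HN_reduced_set_def)
  obtain h where h: "h \<in> H" "\<alpha> = h \<otimes> \<theta>"
    using rcos_self[OF assms(5) H_subgroup] assms(9) unfolding r_coset_def by auto
  then show ?thesis
    using N_red_coset_proj_mult_simple[OF \<theta> h(1)] assms(3,6,7) by fastforce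
qed

end
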